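(* For $w\in S_n$, $$(\bar\chi^w)^\star=\sum_{z}(-1)^{|\iota(z)|-|\iota(y)|}\,\bar\chi^z,$$ where the sum is over those $z\in S_n$ for which the set $\{x\in C_z^\vee:\kappa(x)\ge\kappa(w^{-1})\}$ consists of exactly one element, and $y$ denotes that element.
   Context: Let $q$ be a prime power and $\mathfrak{ut}_n$ the additive group of strictly upper triangular $n\times n$ matrices over $\mathbb{F}_q$. For $w\in S_n$ (one-line notation): inversion table $\iota_k(w)=\#\{i<w^{-1}(k):w(i)>k\}$, $|\iota(w)|=\sum_k\iota_k(w)$; code $\kappa_k(w)=\#\{i<w(k):w^{-1}(i)>k\}$. Vectors are compared componentwise. $\mathfrak{ut}_w=\{x\in\mathfrak{ut}_n:x_{ij}\ne0\Rightarrow0<j-i\le\iota_i(w)\}$; $\mathfrak{ut}_v\subseteq\mathfrak{ut}_w$ iff $\iota(v)\le\iota(w)$ (inversion table order), and these subgroups form a lattice. The normal lattice supercharacter theory has supercharacters $\chi^w=\sum_\psi\psi(1)\psi$, over irreducible characters $\psi$ of $\mathfrak{ut}_n$ with $\mathfrak{ut}_w$ the largest lattice member contained in $\ker\psi$; $\mathrm{scf}(\mathfrak{ut}_n)$ is their span. The permutation character $\bar\chi^w$ is the character of $\mathrm{Ind}_{\mathfrak{ut}_w}^{\mathfrak{ut}_n}(\mathbf{1})$ (equivalently $\bar\chi^w=\sum_{v:\mathfrak{ut}_v\supseteq\mathfrak{ut}_w}\chi^v$). The involution $\star$ on $\mathrm{scf}(\mathfrak{ut}_n)$ is the linear map $\chi^w\mapsto\chi^{w^{-1}}$.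 For $z\in S_n$, $C_z^\vee$ is the Boolean sublattice of the inversion table order generated by the elements covered by $z$, namely the set of $x\in S_n$ with $\iota_k(z)-1\le\iota_k(x)\le\iota_k(z)$ for all $k$. *)

theory Defs
  imports "HOL-Combinatorics.Permutations" "HOL-Library.Function_Algebras" Complex_Main
begin

definition Sn :: "nat \<Rightarrow> (nat \<Rightarrow> nat) set" where
  "Sn n = {w. w permutes {1..n}}"

definition iota :: "(nat \<Rightarrow> nat) \<Rightarrow> nat \<Rightarrow> nat" where
  "iota w k = card {i. 1 \<le> i \<and> i < inv w k \<and> w i > k}"

definition iota_size :: "nat \<Rightarrow> (nat \<Rightarrow> nat) \<Rightarrow> nat" where
  "iota_size n w = (\<Sum>k=1..n. iota w k)"

definition kappa :: "(nat \<Rightarrow> nat) \<Rightarrow> nat \<Rightarrow> nat" where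
  "kappa w k = card {i. 1 \<le> i \<and> i < w k \<and> inv w i > k}"

definition Cvee :: "nat \<Rightarrow> (nat \<Rightarrow> nat) \<Rightarrow> (nat \<Rightarrow> nat) set" where
  "Cvee n z = {x \<in> Sn n. \<forall>k\<in>{1..n}. iota z k \<le> iota x k + 1 \<and> iota x k \<le> iota z k}"

definition ut :: "nat \<Rightarrow> (nat \<Rightarrow> nat \<Rightarrow> 'a::{finite,field}) set" where
  "ut n = {x. \<forall>i j. x i j \<noteq> 0 \<longrightarrow> 1 \<le> i \<and> i < j \<and> j \<le> n}"

definition utw :: "nat \<Rightarrow> (nat \<Rightarrow> nat) \<Rightarrow> (nat \<Rightarrow> nat \<Rightarrow> 'a::{finite,field}) set" where
  "utw n w = {x \<in> ut n. \<forall>i j. x i j \<noteq> 0 \<longrightarrow> 0 < j - i \<and> j - i \<le> iota w i}"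

text \<open>Irreducible characters of the abelian group (ut n, +): these are exactly the
  linear characters, i.e. homomorphisms into the multiplicative group of C
  (taken to be 0 outside the group).\<close>
definition irr :: "nat \<Rightarrow> ((nat \<Rightarrow> nat \<Rightarrow> 'a::{finite,field}) \<Rightarrow> complex) set" where
  "irr n = {\<psi>. \<psi> 0 = 1 \<and> (\<forall>x y. x \<in> ut n \<longrightarrow> y \<in> ut n \<longrightarrow> \<psi> (x + y) = \<psi> x * \<psi> y)
              \<and> (\<forall>x. x \<notin> ut n \<longrightarrow> \<psi> x = 0)}"

definition ker_char :: "nat \<Rightarrow> ((nat \<Rightarrow> nat \<Rightarrow> 'a::{finite,field}) \<Rightarrow> complex)
    \<Rightarrow> (nat \<Rightarrow> nat \<Rightarrow> 'a) set" where
  "ker_char n \<psi> = {x \<in> ut n. \<psi> x = \<psi> 0}"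

definition largest_in_ker :: "nat \<Rightarrow> (nat \<Rightarrow> nat) \<Rightarrow> ((nat \<Rightarrow> nat \<Rightarrow> 'a::{finite,field}) \<Rightarrow> complex) \<Rightarrow> bool" where
  "largest_in_ker n w \<psi> \<longleftrightarrow> utw n w \<subseteq> ker_char n \<psi> \<and>
     (\<forall>v\<in>Sn n. utw n v \<subseteq> ker_char n \<psi> \<longrightarrow> utw n v \<subseteq> (utw n w :: (nat \<Rightarrow> nat \<Rightarrow> 'a) set))"

definition chi :: "nat \<Rightarrow> (nat \<Rightarrow> nat) \<Rightarrow> (nat \<Rightarrow> nat \<Rightarrow> 'a::{finite,field}) \<Rightarrow> complex" where
  "chi n w = (\<lambda>x. \<Sum>\<psi>\<in>{\<psi>\<in>irr n. largest_in_ker n w \<psi>}. \<psi> 0 * \<psi> x)"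

text \<open>Permutation character of Ind_{ut_w}^{ut_n}(1), via the induced character formula
  (1/|H|) * sum over g in G with g^{-1} x g in H of 1.\<close>
definition chibar :: "nat \<Rightarrow> (nat \<Rightarrow> nat) \<Rightarrow> (nat \<Rightarrow> nat \<Rightarrow> 'a::{finite,field}) \<Rightarrow> complex" where
  "chibar n w = (\<lambda>x. if x \<in> ut n then
      (\<Sum>g\<in>ut n. if - g + x + g \<in> (utw n w :: (nat \<Rightarrow> nat \<Rightarrow> 'a) set) then 1 else 0)
        / of_nat (card (utw n w :: (nat \<Rightarrow> nat \<Rightarrow> 'a) set))
      else 0)"

end

theory Submission
  imports Defs "HOL-Library.Disjoint_Sets" "HOL-Computational_Algebra.Primes"
begin

text \<open>
  As \<open>ut\<^sub>v \<supseteq> ut\<^sub>w\<close> exactly when \<open>\<iota>(v) \<ge> \<iota>(w)\<close>, orthogonality of the characters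
  of the abelian group \<open>ut\<^sub>n\<close> writes the permutation character of \<open>ut\<^sub>w\<close> as the sum
  of the supercharacters \<open>\<chi>\<^sup>v\<close> with \<open>\<iota>(v) \<ge> \<iota>(w)\<close>; as \<open>\<kappa>(u) = \<iota>(u\<^sup>-\<^sup>1)\<close>, its
  image under \<open>\<star>\<close> is the sum of the \<open>\<chi>\<^sup>u\<close> with \<open>\<kappa>(u) \<ge> \<kappa>(w\<^sup>-\<^sup>1)\<close>.
  The Moebius function of the inversion table order is \<open>(-1)^(|\<iota>(z)| - |\<iota>(y)|)\<close>
  on pairs with \<open>y \<in> C\<^sub>z\<^sup>\<or>\<close> and vanishes otherwise, so Moebius inversion turns this
  into a combination of permutation characters of the \<open>ut\<^sub>z\<close> whose coefficients are
  alternating sums over \<open>{y \<in> C\<^sub>z\<^sup>\<or>. \<kappa>(y) \<ge> \<kappa>(w\<^sup>-\<^sup>1)}\<close>. Peeling off the first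
  entry of the inversion table shows inductively that this set is a subcube of the
  cube \<open>C\<^sub>z\<^sup>\<or>\<close>, so its alternating sum vanishes unless it is a single point.
\<close>

section \<open>Inversion tables\<close>

lemma permutes_facts:
  assumes "\<sigma> permutes S"
  shows "\<And>i. i \<in> S \<Longrightarrow> \<sigma> i \<in> S" "\<And>i. i \<in> S \<Longrightarrow> inv \<sigma> i \<in> S"
    "\<And>i. \<sigma> (inv \<sigma> i) = i" "\<And>i. inv \<sigma> (\<sigma> i) = i"
    "\<And>i. i \<notin> S \<Longrightarrow> \<sigma> i = i" "\<And>i. i \<notin> S \<Longrightarrow> inv \<sigma> i = i"
  using permutes_in_image[OF assms] permutes_in_image[OF permutes_inv[OF assms]]
    permutes_inverses[OF assms] permutes_not_in[OF assms] permutes_not_in[OF permutes_inv[OF assms]]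
  by simp_all

text \<open>Inserting the new smallest value at position \<open>a + 1\<close> prepends \<open>a\<close> to the inversion
  table.\<close>

definition perm_insert :: "nat \<Rightarrow> nat \<Rightarrow> (nat \<Rightarrow> nat) \<Rightarrow> nat \<Rightarrow> nat" where
  "perm_insert m a \<sigma> = (\<lambda>i. if i = 0 \<or> Suc m < i then i else if i \<le> a then Suc (\<sigma> i)
      else if i = Suc a then 1 else Suc (\<sigma> (i - 1)))"

definition perm_insert_inv :: "nat \<Rightarrow> nat \<Rightarrow> (nat \<Rightarrow> nat) \<Rightarrow> nat \<Rightarrow> nat" where
  "perm_insert_inv m a \<sigma> = (\<lambda>j. if j = 0 \<or> Suc m < j then j else if j = 1 then Suc a
      else if inv \<sigma> (j - 1) \<le> a then inv \<sigma> (j - 1) else Suc (inv \<sigma> (j - 1)))"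

lemma perm_insert_perm_insert_inv:
  assumes "\<sigma> permutes {1..m}" "a \<le> m"
  shows "perm_insert m a \<sigma> (perm_insert_inv m a \<sigma> j) = j"
proof -
  note f = permutes_facts[OF assms(1)]
  consider "j = 0 \<or> Suc m < j" | "j = 1" | "j - 1 \<in> {1..m}" by fastforce
  then show ?thesis
  proof cases
    case 3
    then have "inv \<sigma> (j - 1) \<in> {1..m}" using f(2) by blast
    with 3 show ?thesis using f(3)[of "j - 1"] by (auto simp: perm_insert_def perm_insert_inv_def)
  qed (use assms in \<open>auto simp: perm_insert_def perm_insert_inv_def\<close>)
qed

lemma perm_insert_inv_perm_insert:
  assumes "\<sigma> permutes {1..m}" "a \<le> m"
  shows "perm_insert_inv m a \<sigma> (perm_insert m a \<sigma> i) = i"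
proof -
  note f = permutes_facts[OF assms(1)]
  consider "i = 0 \<or> Suc m < i" | "i = Suc a" | "i \<in> {1..a}" | "i - 1 \<in> {Suc a..m}" "Suc a < i"
    using assms(2) by fastforce
  then show ?thesis
  proof cases
    case 3
    then have "\<sigma> i \<in> {1..m}" using f(1) assms(2) by auto
    with 3 show ?thesis using f(4)[of i] by (auto simp: perm_insert_def perm_insert_inv_def)
  next
    case 4
    then have "\<sigma> (i - 1) \<in> {1..m}" using f(1) assms(2) by auto
    with 4 show ?thesis using f(4)[of "i - 1"] by (auto simp: perm_insert_def perm_insert_inv_def)
  qed (auto simp: perm_insert_def perm_insert_inv_def)
qed

lemma perm_insert_permutes:
  assumes "\<sigma> permutes {1..m}" "a \<le> m"
  shows "perm_insert m a \<sigma> permutes {1..Suc m}"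
  unfolding permutes_def
proof (intro conjI allI impI)
  show "\<And>x. x \<notin> {1..Suc m} \<Longrightarrow> perm_insert m a \<sigma> x = x" by (auto simp: perm_insert_def)
  show "\<exists>!x. perm_insert m a \<sigma> x = y" for y
    by (metis perm_insert_perm_insert_inv[OF assms] perm_insert_inv_perm_insert[OF assms])
qed

lemma inv_perm_insert:
  assumes "\<sigma> permutes {1..m}" "a \<le> m"
  shows "inv (perm_insert m a \<sigma>) = perm_insert_inv m a \<sigma>"
  by (rule inv_unique_comp)
    (simp_all add: fun_eq_iff perm_insert_perm_insert_inv[OF assms] perm_insert_inv_perm_insert[OF assms])

lemma iota_perm_insert_1:
  assumes "\<sigma> permutes {1..m}" "a \<le> m"
  shows "iota (perm_insert m a \<sigma>) 1 = a"
proof -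
  have "inv (perm_insert m a \<sigma>) 1 = Suc a" by (simp add: inv_perm_insert[OF assms] perm_insert_inv_def)
  moreover have "{i. 1 \<le> i \<and> i < Suc a \<and> 1 < perm_insert m a \<sigma> i} = {1..a}"
  proof (rule set_eqI, rule iffI)
    fix i assume "i \<in> {1..a}"
    then have "\<sigma> i \<in> {1..m}" using assms(2) permutes_facts(1)[OF assms(1)] by auto
    then show "i \<in> {i. 1 \<le> i \<and> i < Suc a \<and> 1 < perm_insert m a \<sigma> i}"
      using \<open>i \<in> {1..a}\<close> assms(2) by (auto simp: perm_insert_def)
  qed auto
  ultimately show ?thesis by (simp add: iota_def)
qed

lemma iota_perm_insert_Suc:
  assumes "\<sigma> permutes {1..m}" "a \<le> m" "k \<in> {1..m}"
  shows "iota (perm_insert m a \<sigma>) (Suc k) = iota \<sigma> k"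
proof -
  note f = permutes_facts[OF assms(1)]
  define b where "b = inv \<sigma> k"
  have b: "b \<in> {1..m}" "\<sigma> b = k" using f(2,3) assms(3) b_def by auto
  have pos: "inv (perm_insert m a \<sigma>) (Suc k) = (if b \<le> a then b else Suc b)"
    using assms(3) by (simp add: inv_perm_insert[OF assms(1,2)] perm_insert_inv_def b_def)
  define g where "g = (\<lambda>j::nat. if j \<le> a then j else Suc j)"
  have inj: "inj_on g A" for A by (auto simp: g_def inj_on_def split: if_splits)
  have "{i. 1 \<le> i \<and> i < inv (perm_insert m a \<sigma>) (Suc k) \<and> Suc k < perm_insert m a \<sigma> i}
      = g ` {i. 1 \<le> i \<and> i < inv \<sigma> k \<and> k < \<sigma> i}"
  proof (rule set_eqI, rule iffI)
    fix j assume "j \<in> {i. 1 \<le> i \<and> i < inv (perm_insert m a \<sigma>) (Suc k) \<and> Suc k < perm_insert m a \<sigma> i}"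
    then have j: "1 \<le> j" "j < (if b \<le> a then b else Suc b)" "Suc k < perm_insert m a \<sigma> j"
      using pos by auto
    have "j \<le> Suc m" using j b by (auto split: if_splits)
    then consider "j \<le> a" "k < \<sigma> j" "j < b" | "Suc a < j" "k < \<sigma> (j - 1)" "j - 1 < b"
      using j by (auto simp: perm_insert_def split: if_splits)
    then show "j \<in> g ` {i. 1 \<le> i \<and> i < inv \<sigma> k \<and> k < \<sigma> i}"
    proof cases
      case 1 then show ?thesis using j by (auto simp: g_def b_def image_iff intro!: bexI[of _ j])
    next
      case 2 then show ?thesis
        using j by (auto simp: g_def b_def image_iff intro!: bexI[of _ "j - 1"])
    qed
  next
    fix j assume "j \<in> g ` {i. 1 \<le> i \<and> i < inv \<sigma> k \<and> k < \<sigma> i}"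
    then obtain i where i: "1 \<le> i" "i < b" "k < \<sigma> i" "j = g i" by (auto simp: b_def)
    then have "i \<in> {1..m}" using b by auto
    then show "j \<in> {i. 1 \<le> i \<and> i < inv (perm_insert m a \<sigma>) (Suc k) \<and> Suc k < perm_insert m a \<sigma> i}"
      using i pos by (auto simp: g_def perm_insert_def)
  qed
  then show ?thesis unfolding iota_def by (simp add: card_image[OF inj])
qed

lemma kappa_perm_insert_le:
  assumes "\<sigma> permutes {1..m}" "a \<le> m" "i \<in> {1..a}"
  shows "kappa (perm_insert m a \<sigma>) i = Suc (kappa \<sigma> i)"
proof -
  have iv: "inv (perm_insert m a \<sigma>) j = perm_insert_inv m a \<sigma> j" for j
    by (simp add: inv_perm_insert[OF assms(1,2)])
  have im: "i \<in> {1..m}" using assms(2,3) by auto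
  have si: "\<sigma> i \<in> {1..m}" using permutes_facts(1)[OF assms(1) im] .
  have "{j. 1 \<le> j \<and> j < perm_insert m a \<sigma> i \<and> i < inv (perm_insert m a \<sigma>) j}
    = insert 1 (Suc ` {j. 1 \<le> j \<and> j < \<sigma> i \<and> i < inv \<sigma> j})"
  proof (rule set_eqI, rule iffI)
    fix j assume "j \<in> {j. 1 \<le> j \<and> j < perm_insert m a \<sigma> i \<and> i < inv (perm_insert m a \<sigma>) j}"
    then have j: "1 \<le> j" "j < Suc (\<sigma> i)" "i < perm_insert_inv m a \<sigma> j"
      using assms(3) im iv by (auto simp: perm_insert_def)
    show "j \<in> insert 1 (Suc ` {j. 1 \<le> j \<and> j < \<sigma> i \<and> i < inv \<sigma> j})"
    proof (cases "j = 1")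
      case False
      then have "j - 1 \<in> {1..m}" using j si by auto
      then have "i < inv \<sigma> (j - 1)"
        using j False assms(3) by (auto simp: perm_insert_inv_def split: if_splits)
      then show ?thesis using j False by (intro insertI2 image_eqI[where x="j - 1"]) auto
    qed simp
  next
    fix j assume "j \<in> insert 1 (Suc ` {j. 1 \<le> j \<and> j < \<sigma> i \<and> i < inv \<sigma> j})"
    then show "j \<in> {j. 1 \<le> j \<and> j < perm_insert m a \<sigma> i \<and> i < inv (perm_insert m a \<sigma>) j}"
      using assms(3) im iv si by (auto simp: perm_insert_def perm_insert_inv_def)
  qed
  moreover have "finite {j. 1 \<le> j \<and> j < \<sigma> i \<and> i < inv \<sigma> j}" by simp
  moreover have "1 \<notin> Suc ` {j. 1 \<le> j \<and> j < \<sigma> i \<and> i < inv \<sigma> j}" by auto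
  ultimately show ?thesis unfolding kappa_def by (simp add: card_insert_disjoint card_image)
qed

lemma kappa_perm_insert_gt:
  assumes "\<sigma> permutes {1..m}" "a \<le> m" "i \<in> {Suc (Suc a)..Suc m}"
  shows "kappa (perm_insert m a \<sigma>) i = kappa \<sigma> (i - 1)"
proof -
  have iv: "inv (perm_insert m a \<sigma>) j = perm_insert_inv m a \<sigma> j" for j
    by (simp add: inv_perm_insert[OF assms(1,2)])
  have im: "i - 1 \<in> {1..m}" using assms(3) by auto
  have si: "\<sigma> (i - 1) \<in> {1..m}" using permutes_facts(1)[OF assms(1) im] .
  have pi: "perm_insert m a \<sigma> i = Suc (\<sigma> (i - 1))" using assms(3) by (auto simp: perm_insert_def)
  have "{j. 1 \<le> j \<and> j < perm_insert m a \<sigma> i \<and> i < inv (perm_insert m a \<sigma>) j}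
    = Suc ` {j. 1 \<le> j \<and> j < \<sigma> (i - 1) \<and> i - 1 < inv \<sigma> j}"
  proof (rule set_eqI, rule iffI)
    fix j assume "j \<in> {j. 1 \<le> j \<and> j < perm_insert m a \<sigma> i \<and> i < inv (perm_insert m a \<sigma>) j}"
    then have j: "1 \<le> j" "j < Suc (\<sigma> (i - 1))" "i < perm_insert_inv m a \<sigma> j" using pi iv by auto
    have j1: "j \<noteq> 1" using j assms(3) by (auto simp: perm_insert_inv_def)
    have "j - 1 \<in> {1..m}" using j j1 si by auto
    then have "i - 1 < inv \<sigma> (j - 1)"
      using j j1 assms(3) by (auto simp: perm_insert_inv_def split: if_splits)
    then show "j \<in> Suc ` {j. 1 \<le> j \<and> j < \<sigma> (i - 1) \<and> i - 1 < inv \<sigma> j}"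
      using j j1 by (intro image_eqI[where x="j - 1"]) auto
  next
    fix j assume "j \<in> Suc ` {j. 1 \<le> j \<and> j < \<sigma> (i - 1) \<and> i - 1 < inv \<sigma> j}"
    then show "j \<in> {j. 1 \<le> j \<and> j < perm_insert m a \<sigma> i \<and> i < inv (perm_insert m a \<sigma>) j}"
      using assms(3) pi iv si by (auto simp: perm_insert_inv_def)
  qed
  then show ?thesis unfolding kappa_def by (simp add: card_image)
qed

lemma kappa_perm_insert:
  assumes "\<sigma> permutes {1..m}" "a \<le> m" "i \<in> {1..Suc m}"
  shows "kappa (perm_insert m a \<sigma>) i =
    (if i \<le> a then Suc (kappa \<sigma> i) else if i = Suc a then 0 else kappa \<sigma> (i - 1))"
proof -
  consider "i \<in> {1..a}" | "i = Suc a" | "i \<in> {Suc (Suc a)..Suc m}" using assms(3) by fastforce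
  then show ?thesis
  proof cases
    case 2 then show ?thesis using assms(2) by (simp add: kappa_def perm_insert_def)
  qed (use kappa_perm_insert_le[OF assms(1,2)] kappa_perm_insert_gt[OF assms(1,2)] in auto)
qed

text \<open>Inversion tables of \<open>S\<^sub>n\<close>, indexed from \<open>1\<close>; the constraints force \<open>t k = 0\<close>
  outside \<open>{1..n}\<close>.\<close>

definition inv_tables :: "nat \<Rightarrow> (nat \<Rightarrow> nat) set" where
  "inv_tables n = {t. t 0 = 0 \<and> (\<forall>k. t k \<le> n - k)}"

definition tab_tail :: "(nat \<Rightarrow> nat) \<Rightarrow> nat \<Rightarrow> nat" where
  "tab_tail t = (\<lambda>k. if k = 0 then 0 else t (Suc k))"

definition tab_cons :: "nat \<Rightarrow> (nat \<Rightarrow> nat) \<Rightarrow> nat \<Rightarrow> nat" where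
  "tab_cons a t = (\<lambda>k. if k = 0 then 0 else if k = 1 then a else t (k - 1))"

fun perm_of_table :: "nat \<Rightarrow> (nat \<Rightarrow> nat) \<Rightarrow> nat \<Rightarrow> nat" where
  "perm_of_table 0 t = id"
| "perm_of_table (Suc m) t = perm_insert m (t 1) (perm_of_table m (tab_tail t))"

lemma inv_tables_0: "inv_tables 0 = {\<lambda>_. 0}"
  by (auto simp: inv_tables_def fun_eq_iff)

lemma tab_cons_tab_tail: "t 0 = 0 \<Longrightarrow> tab_cons (t 1) (tab_tail t) = t"
  by (auto simp: tab_cons_def tab_tail_def fun_eq_iff)

lemma tab_tail_tab_cons [simp]: "t 0 = 0 \<Longrightarrow> tab_tail (tab_cons a t) = t"
  by (auto simp: tab_cons_def tab_tail_def fun_eq_iff)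

lemma tab_cons_Suc_0 [simp]: "tab_cons a t (Suc 0) = a"
  by (simp add: tab_cons_def)

lemma inv_tables_SucD:
  assumes "t \<in> inv_tables (Suc m)"
  shows "tab_tail t \<in> inv_tables m" "t 1 \<le> m" "tab_cons (t 1) (tab_tail t) = t"
proof -
  have t: "t 0 = 0" "\<And>k. t k \<le> Suc m - k" using assms by (auto simp: inv_tables_def)
  have "tab_tail t k \<le> m - k" for k using t(2)[of "Suc k"] by (simp add: tab_tail_def)
  then show "tab_tail t \<in> inv_tables m" by (simp add: inv_tables_def tab_tail_def)
  show "t 1 \<le> m" using t(2)[of 1] by simp
  show "tab_cons (t 1) (tab_tail t) = t" using t(1) by (rule tab_cons_tab_tail)
qed

lemma tab_cons_in_inv_tables:
  assumes "t \<in> inv_tables m" "a \<le> m"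
  shows "tab_cons a t \<in> inv_tables (Suc m)"
  unfolding inv_tables_def
proof (intro CollectI conjI allI)
  fix k show "tab_cons a t k \<le> Suc m - k"
  proof (cases "k \<le> 1")
    case False
    have "t (k - 1) \<le> m - (k - 1)" using assms(1) by (simp add: inv_tables_def)
    then show ?thesis using False by (auto simp: tab_cons_def)
  qed (use assms in \<open>auto simp: tab_cons_def\<close>)
qed (simp add: tab_cons_def)

lemma inv_tables_Suc_iff:
  "t \<in> inv_tables (Suc m) \<longleftrightarrow> t 0 = 0 \<and> t 1 \<le> m \<and> tab_tail t \<in> inv_tables m"
proof
  assume "t \<in> inv_tables (Suc m)"
  then show "t 0 = 0 \<and> t 1 \<le> m \<and> tab_tail t \<in> inv_tables m"
    using inv_tables_SucD[of t m] by (simp add: inv_tables_def)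
next
  assume "t 0 = 0 \<and> t 1 \<le> m \<and> tab_tail t \<in> inv_tables m"
  then show "t \<in> inv_tables (Suc m)"
    using tab_cons_in_inv_tables[of "tab_tail t" m "t 1"] tab_cons_tab_tail[of t] by simp
qed

lemma inv_tables_eq_0_outside: "t \<in> inv_tables n \<Longrightarrow> k \<notin> {1..n} \<Longrightarrow> t k = 0"
  unfolding inv_tables_def by (cases k) (auto dest: spec[of _ k])

lemma inv_tables_downward_closed: "t \<in> inv_tables n \<Longrightarrow> s \<le> t \<Longrightarrow> s \<in> inv_tables n"
  unfolding inv_tables_def le_fun_def by (auto intro: order.trans dest: spec[of _ 0])

lemma zero_in_inv_tables: "(\<lambda>_. 0) \<in> inv_tables n"
  by (simp add: inv_tables_def)

lemma sup_in_inv_tables: "s \<in> inv_tables n \<Longrightarrow> t \<in> inv_tables n \<Longrightarrow> sup s t \<in> inv_tables n"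
  by (simp add: inv_tables_def)

lemma tab_cons_le_tab_cons_iff:
  assumes "s 0 = 0"
  shows "tab_cons a s \<le> tab_cons b t \<longleftrightarrow> a \<le> b \<and> s \<le> t"
proof
  assume le: "tab_cons a s \<le> tab_cons b t"
  have "a \<le> b" using le_funD[OF le, of 1] by simp
  moreover have "s k \<le> t k" for k
    using le_funD[OF le, of "Suc k"] assms by (cases k) (auto simp: tab_cons_def)
  ultimately show "a \<le> b \<and> s \<le> t" by (simp add: le_fun_def)
next
  assume "a \<le> b \<and> s \<le> t"
  then show "tab_cons a s \<le> tab_cons b t" by (auto simp: le_fun_def tab_cons_def)
qed

lemma mem_tab_cons_box_iff:
  assumes "lo 0 = 0"
  shows "t \<in> {tab_cons a lo..tab_cons b hi} \<longleftrightarrow> t 0 = 0 \<and> t 1 \<in> {a..b} \<and> tab_tail t \<in> {lo..hi}"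
proof (cases "t 0 = 0")
  case True
  have "tab_tail t 0 = 0" by (simp add: tab_tail_def)
  have "t \<in> {tab_cons a lo..tab_cons b hi} \<longleftrightarrow>
      tab_cons a lo \<le> tab_cons (t 1) (tab_tail t) \<and> tab_cons (t 1) (tab_tail t) \<le> tab_cons b hi"
    using tab_cons_tab_tail[of t] True by simp
  also have "\<dots> \<longleftrightarrow> (a \<le> t 1 \<and> lo \<le> tab_tail t) \<and> (t 1 \<le> b \<and> tab_tail t \<le> hi)"
    using tab_cons_le_tab_cons_iff assms \<open>tab_tail t 0 = 0\<close> by simp
  finally show ?thesis using True by auto
next
  case False
  then have "\<not> t \<le> tab_cons b hi" by (auto simp: le_fun_def tab_cons_def dest: spec[of _ 0])
  then show ?thesis using False by simp
qed

lemma bij_betw_inv_tables_Suc: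
  "bij_betw (\<lambda>t. (t 1, tab_tail t)) (inv_tables (Suc m)) ({0..m} \<times> inv_tables m)"
proof (rule bij_betw_byWitness[where f' = "\<lambda>(a, t). tab_cons a t"])
  show "\<forall>t\<in>inv_tables (Suc m). (\<lambda>(a, t). tab_cons a t) (t 1, tab_tail t) = t"
    using inv_tables_SucD(3) by auto
  show "\<forall>p\<in>{0..m} \<times> inv_tables m. (\<lambda>t. (t 1, tab_tail t)) ((\<lambda>(a, t). tab_cons a t) p) = p"
  proof
    fix p assume "p \<in> {0..m} \<times> inv_tables m"
    then obtain a t where "p = (a, t)" "t 0 = 0" by (auto simp: inv_tables_def)
    then show "(\<lambda>t. (t 1, tab_tail t)) ((\<lambda>(a, t). tab_cons a t) p) = p" by simp
  qed
  show "(\<lambda>t. (t 1, tab_tail t)) ` inv_tables (Suc m) \<subseteq> {0..m} \<times> inv_tables m"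
    using inv_tables_SucD(1,2) by auto
  show "(\<lambda>(a, t). tab_cons a t) ` ({0..m} \<times> inv_tables m) \<subseteq> inv_tables (Suc m)"
    using tab_cons_in_inv_tables by auto
qed

lemma finite_card_inv_tables: "finite (inv_tables n) \<and> card (inv_tables n) = fact n"
proof (induction n)
  case 0 then show ?case by (simp add: inv_tables_0)
next
  case (Suc m)
  then show ?case
    using bij_betw_same_card[OF bij_betw_inv_tables_Suc] bij_betw_finite[OF bij_betw_inv_tables_Suc]
    by (simp add: card_cartesian_product)
qed

lemma finite_Sn: "finite (Sn n)"
  unfolding Sn_def using finite_permutations[of "{1..n}"] by simp

lemma card_Sn: "card (Sn n) = fact n"
  unfolding Sn_def using card_permutations[of "{1..n}" n] by simp

lemma inv_in_Sn: "u \<in> Sn n \<Longrightarrow> inv u \<in> Sn n"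
  by (simp add: Sn_def permutes_inv)

lemma sum_Sn_inv: "(\<Sum>v\<in>Sn n. f (inv v)) = (\<Sum>u\<in>Sn n. f u)"
proof (rule sum.reindex_bij_betw)
  show "bij_betw inv (Sn n) (Sn n)"
    by (rule bij_betw_byWitness[where f' = inv]) (auto simp: Sn_def permutes_inv permutes_inv_inv)
qed

lemma perm_of_table_in_Sn: "t \<in> inv_tables n \<Longrightarrow> perm_of_table n t \<in> Sn n"
proof (induction n arbitrary: t)
  case (Suc m)
  then show ?case using inv_tables_SucD[OF Suc.prems] perm_insert_permutes by (simp add: Sn_def)
qed (simp add: Sn_def)

lemma iota_eq_0_outside:
  assumes "w \<in> Sn n" "k \<notin> {1..n}"
  shows "iota w k = 0"
proof -
  note f = permutes_facts[OF assms(1)[unfolded Sn_def mem_Collect_eq]]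
  have "inv w k = k" using f(6) assms(2) by auto
  moreover have "\<not> (i < k \<and> k < w i)" if "n < k" for i
    using f(1)[of i] f(5)[of i] that by (cases "i \<in> {1..n}") auto
  ultimately show ?thesis using assms(2) by (auto simp: iota_def not_le)
qed

lemma iota_in_inv_tables:
  assumes "w \<in> Sn n"
  shows "iota w \<in> inv_tables n"
proof -
  note f = permutes_facts[OF assms[unfolded Sn_def mem_Collect_eq]]
  have "iota w k \<le> n - k" if k: "k \<in> {1..n}" for k
  proof -
    have "{i. 1 \<le> i \<and> i < inv w k \<and> k < w i} \<subseteq> inv w ` {Suc k..n}"
    proof
      fix i assume i: "i \<in> {i. 1 \<le> i \<and> i < inv w k \<and> k < w i}"
      then have "i \<in> {1..n}" using f(2)[OF k] by auto
      then have "w i \<in> {Suc k..n}" using f(1) i by auto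
      then show "i \<in> inv w ` {Suc k..n}" using f(4) by (metis image_eqI)
    qed
    then have "iota w k \<le> card (inv w ` {Suc k..n})" unfolding iota_def by (intro card_mono) auto
    also have "\<dots> \<le> card {Suc k..n}" by (rule card_image_le) auto
    finally show ?thesis by simp
  qed
  moreover have "iota w k \<le> n - k" if "k \<notin> {1..n}" for k
    using iota_eq_0_outside[OF assms that] by simp
  ultimately show ?thesis
    using iota_eq_0_outside[OF assms, of 0] unfolding inv_tables_def by auto
qed

lemma iota_perm_of_table: "t \<in> inv_tables n \<Longrightarrow> iota (perm_of_table n t) = t"
proof (induction n arbitrary: t)
  case 0
  then show ?case by (auto simp: iota_def inv_tables_0)
next
  case (Suc m)
  note D = inv_tables_SucD[OF Suc.prems]
  define \<sigma> where "\<sigma> = perm_of_table m (tab_tail t)"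
  have \<sigma>: "\<sigma> permutes {1..m}" using perm_of_table_in_Sn[OF D(1)] by (simp add: Sn_def \<sigma>_def)
  have IH: "iota \<sigma> = tab_tail t" unfolding \<sigma>_def by (rule Suc.IH[OF D(1)])
  show ?case
  proof
    fix k
    show "iota (perm_of_table (Suc m) t) k = t k"
    proof (cases "k \<in> {1..Suc m}")
      case False
      have "t k \<le> Suc m - k" "t 0 = 0" using Suc.prems by (auto simp: inv_tables_def)
      then have "t k = 0" using False by (cases k) auto
      then show ?thesis using iota_eq_0_outside[OF perm_of_table_in_Sn[OF Suc.prems] False] by simp
    next
      case True
      then have "k = 1 \<or> k - 1 \<in> {1..m}" by auto
      then show ?thesis
      proof
        assume "k = 1"
        then show ?thesis using iota_perm_insert_1[OF \<sigma> D(2)] by (simp add: \<sigma>_def)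
      next
        assume k: "k - 1 \<in> {1..m}"
        then obtain j where j: "k = Suc j" "j \<in> {1..m}" by (cases k) auto
        then have "iota (perm_of_table (Suc m) t) k = iota \<sigma> j"
          using iota_perm_insert_Suc[OF \<sigma> D(2) j(2)] by (simp add: \<sigma>_def)
        also have "\<dots> = t k" using IH j by (simp add: tab_tail_def)
        finally show ?thesis .
      qed
    qed
  qed
qed

lemma bij_betw_perm_of_table: "bij_betw (perm_of_table n) (inv_tables n) (Sn n)"
proof -
  have inj: "inj_on (perm_of_table n) (inv_tables n)" by (metis inj_onI iota_perm_of_table)
  moreover have "perm_of_table n ` inv_tables n \<subseteq> Sn n" using perm_of_table_in_Sn by auto
  moreover have "card (perm_of_table n ` inv_tables n) = card (Sn n)"
    using card_image[OF inj] finite_card_inv_tables card_Sn by simp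
  ultimately show ?thesis using finite_Sn by (simp add: bij_betw_def card_subset_eq)
qed

lemma perm_of_table_iota: "w \<in> Sn n \<Longrightarrow> perm_of_table n (iota w) = w"
  using bij_betw_perm_of_table[of n] iota_perm_of_table by (metis bij_betw_imp_surj_on imageE)

lemma inj_on_iota: "inj_on iota (Sn n)"
  by (metis inj_onI perm_of_table_iota)

lemma bij_betw_iota_preimage:
  assumes "T \<subseteq> inv_tables n"
  shows "bij_betw iota {z \<in> Sn n. iota z \<in> T} T"
proof (rule bij_betw_byWitness[where f' = "perm_of_table n"])
  show "\<forall>z\<in>{z \<in> Sn n. iota z \<in> T}. perm_of_table n (iota z) = z" by (simp add: perm_of_table_iota)
  show "\<forall>t\<in>T. iota (perm_of_table n t) = t" using assms iota_perm_of_table by blast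
  show "iota ` {z \<in> Sn n. iota z \<in> T} \<subseteq> T" by blast
  show "perm_of_table n ` T \<subseteq> {z \<in> Sn n. iota z \<in> T}"
    using assms perm_of_table_in_Sn iota_perm_of_table by auto
qed

lemma kappa_perm_of_table_Suc:
  assumes "t \<in> inv_tables (Suc m)" "i \<in> {1..Suc m}"
  shows "kappa (perm_of_table (Suc m) t) i =
    (if i \<le> t 1 then Suc (kappa (perm_of_table m (tab_tail t)) i)
     else if i = Suc (t 1) then 0 else kappa (perm_of_table m (tab_tail t)) (i - 1))"
proof -
  note D = inv_tables_SucD[OF assms(1)]
  have "perm_of_table m (tab_tail t) permutes {1..m}"
    using perm_of_table_in_Sn[OF D(1)] by (simp add: Sn_def)
  then show ?thesis using kappa_perm_insert[OF _ D(2) assms(2)] by simp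
qed

lemma kappa_eq_iota_inv: "u \<in> Sn n \<Longrightarrow> kappa u = iota (inv u)"
  by (simp add: Sn_def kappa_def iota_def fun_eq_iff permutes_inv_inv)

lemma iota_le_iota_inv_iff:
  assumes "w \<in> Sn n" "u \<in> Sn n"
  shows "iota w \<le> iota (inv u) \<longleftrightarrow> (\<forall>k\<in>{1..n}. kappa (inv w) k \<le> kappa u k)"
proof -
  have "kappa (inv w) = iota w"
    using kappa_eq_iota_inv[OF inv_in_Sn[OF assms(1)]] assms(1) by (simp add: Sn_def permutes_inv_inv)
  moreover have "kappa u = iota (inv u)" by (rule kappa_eq_iota_inv[OF assms(2)])
  ultimately show ?thesis
    using iota_eq_0_outside[OF assms(1)] iota_eq_0_outside[OF inv_in_Sn[OF assms(2)]]
    by (auto simp: le_fun_def)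
qed

section \<open>Alternating sums over boxes of tables\<close>

definition table_size :: "nat \<Rightarrow> (nat \<Rightarrow> nat) \<Rightarrow> nat" where
  "table_size n t = (\<Sum>k=1..n. t k)"

lemma iota_size_eq_table_size: "iota_size n w = table_size n (iota w)"
  by (simp add: iota_size_def table_size_def)

lemma table_size_mono: "t \<le> s \<Longrightarrow> table_size n t \<le> table_size n s"
  unfolding table_size_def by (intro sum_mono) (simp add: le_fun_def)

lemma table_size_upd:
  assumes "k \<in> {1..n}"
  shows "table_size n (t(k := v)) + t k = table_size n t + v"
  using assms by (simp add: table_size_def sum.remove)

lemma table_size_less_sup:
  assumes "s \<in> inv_tables n" "t \<in> inv_tables n" "\<not> t \<le> s"
  shows "table_size n s < table_size n (sup s t)"
proof -
  obtain k where k: "s k < t k" using assms(3) unfolding le_fun_def by (meson not_le)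
  then have "k \<in> {1..n}"
    using inv_tables_eq_0_outside[OF assms(1), of k] inv_tables_eq_0_outside[OF assms(2), of k] by auto
  then show ?thesis unfolding table_size_def
    by (intro sum_strict_mono_ex1) (use k in \<open>auto simp: sup_fun_def sup_nat_def intro!: bexI[of _ k]\<close>)
qed

lemma minus_one_power_diff:
  assumes "b \<le> a"
  shows "(-1::'a::comm_ring_1) ^ (a - b) = (-1) ^ a * (-1) ^ b"
proof -
  have "(-1::'a) ^ a = (-1) ^ (a - b) * (-1) ^ b" using assms by (simp add: power_add[symmetric])
  moreover have "(-1::'a) ^ b * (-1) ^ b = 1" by (simp add: power_mult_distrib[symmetric])
  ultimately show ?thesis by (metis mult.assoc mult.right_neutral)
qed

text \<open>Toggling a coordinate in which \<open>lo\<close> and \<open>hi\<close> differ is a sign-reversing involution.\<close>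

lemma sum_sign_unit_box:
  fixes lo hi :: "nat \<Rightarrow> nat"
  assumes "lo \<le> hi" "\<And>k. hi k \<le> Suc (lo k)" "\<And>k. k \<notin> {1..n} \<Longrightarrow> lo k = hi k"
  shows "(\<Sum>t\<in>{lo..hi}. (-1::'a::ring_1) ^ table_size n t) = (if lo = hi then (-1) ^ table_size n lo else 0)"
proof (cases "lo = hi")
  case False
  then obtain k where k: "lo k \<noteq> hi k" by auto
  then have hi_k: "hi k = Suc (lo k)" and kn: "k \<in> {1..n}"
    using le_funD[OF assms(1), of k] assms(2)[of k] assms(3)[of k] by linarith+
  define g where "g = (\<lambda>t::nat \<Rightarrow> nat. t(k := lo k + hi k - t k))"
  have t_k: "t k = lo k \<or> t k = hi k" if "t \<in> {lo..hi}" for t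
    using that hi_k le_funD[of lo t k] le_funD[of t hi k] by auto
  have "(\<Sum>t\<in>{lo..hi}. (-1::'a) ^ table_size n t) = 0"
  proof (rule sum_involution_eq_0[where h = g])
    fix t assume t: "t \<in> {lo..hi}"
    have size: "table_size n (g t) + t k = table_size n t + (lo k + hi k - t k)"
      unfolding g_def by (rule table_size_upd[OF kn])
    from t_k[OF t] show "(-1::'a) ^ table_size n (g t) + (-1) ^ table_size n t = 0"
    proof
      assume "t k = lo k"
      then have "table_size n (g t) = Suc (table_size n t)" using size hi_k by simp
      then show ?thesis by simp
    next
      assume "t k = hi k"
      then have "table_size n t = Suc (table_size n (g t))" using size hi_k by simp
      then show ?thesis by simp
    qed
    show "g t \<in> {lo..hi}" "g (g t) = t" "g t \<noteq> t"
      using t t_k[OF t] hi_k unfolding g_def by (auto simp: fun_eq_iff le_fun_def)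
  qed
  then show ?thesis using False by simp
qed simp

text \<open>\<open>S\<close> is empty or a box inside the cube \<open>{t. zt - 1 \<le> t \<le> zt}\<close>, which is the table
  image of \<open>C\<^sub>z\<^sup>\<or>\<close> for \<open>zt = \<iota>(z)\<close>.\<close>

definition unit_box_below :: "(nat \<Rightarrow> nat) \<Rightarrow> (nat \<Rightarrow> nat) set \<Rightarrow> bool" where
  "unit_box_below zt S \<longleftrightarrow> S = {} \<or>
     (\<exists>lo hi. lo \<le> hi \<and> hi \<le> zt \<and> (\<forall>k. zt k \<le> Suc (lo k)) \<and> S = {lo..hi})"

lemma sum_sign_unit_box_below_eq_0:
  assumes zt: "zt \<in> inv_tables n" and "unit_box_below zt S" "card S \<noteq> 1"
  shows "(\<Sum>t\<in>S. (-1::'a::comm_ring_1) ^ (table_size n zt - table_size n t)) = 0"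
proof (cases "S = {}")
  case False
  then obtain lo hi where box: "lo \<le> hi" "hi \<le> zt" "\<And>k. zt k \<le> Suc (lo k)" "S = {lo..hi}"
    using assms(2) unfolding unit_box_below_def by blast
  then have "lo \<noteq> hi" using assms(3) by auto
  have hi_table: "hi \<in> inv_tables n" by (rule inv_tables_downward_closed[OF zt box(2)])
  have lo_table: "lo \<in> inv_tables n" by (rule inv_tables_downward_closed[OF hi_table box(1)])
  have "(\<Sum>t\<in>S. (-1::'a) ^ (table_size n zt - table_size n t))
      = (-1) ^ table_size n zt * (\<Sum>t\<in>{lo..hi}. (-1) ^ table_size n t)"
    unfolding box(4) sum_distrib_left
    using box(2) by (intro sum.cong refl minus_one_power_diff table_size_mono) auto
  also have "\<dots> = 0"
  proof -
    have unit: "hi k \<le> Suc (lo k)" for k using le_funD[OF box(2), of k] box(3)[of k] by linarith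
    have outside: "lo k = hi k" if "k \<notin> {1..n}" for k
      using inv_tables_eq_0_outside[OF lo_table that] inv_tables_eq_0_outside[OF hi_table that] by simp
    show ?thesis using sum_sign_unit_box[where 'a = 'a and n = n, OF box(1) unit outside] \<open>lo \<noteq> hi\<close>
      by simp
  qed
  finally show ?thesis .
qed simp

lemma unit_box_below_tab_cons:
  assumes box: "lo \<le> hi" "hi \<le> zt" "\<And>k. zt k \<le> Suc (lo k)" "zt 0 = 0"
    and first: "alo \<le> ahi" "ahi \<le> z" "z \<le> Suc alo"
  shows "unit_box_below (tab_cons z zt) {t. t 0 = 0 \<and> t 1 \<in> {alo..ahi} \<and> tab_tail t \<in> {lo..hi}}"
proof -
  have "hi 0 = 0" "lo 0 = 0" using le_funD[OF box(1), of 0] le_funD[OF box(2), of 0] box(4) by simp_all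
  then have "{t. t 0 = 0 \<and> t 1 \<in> {alo..ahi} \<and> tab_tail t \<in> {lo..hi}} = {tab_cons alo lo..tab_cons ahi hi}"
    using mem_tab_cons_box_iff[where lo = lo] by blast
  moreover have "tab_cons alo lo \<le> tab_cons ahi hi"
    using tab_cons_le_tab_cons_iff[of lo alo ahi hi] \<open>lo 0 = 0\<close> box(1) first(1) by simp
  moreover have "tab_cons ahi hi \<le> tab_cons z zt"
    using tab_cons_le_tab_cons_iff[of hi ahi z zt] \<open>hi 0 = 0\<close> box(2) first(2) by simp
  moreover have "tab_cons z zt k \<le> Suc (tab_cons alo lo k)" for k
    using box(3) first(3) by (simp add: tab_cons_def)
  ultimately show ?thesis unfolding unit_box_below_def by blast
qed

section \<open>The Boolean intervals \<open>C\<^sub>z\<^sup>\<or>\<close>\<close>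

lemma Cvee_iff:
  assumes "z \<in> Sn n"
  shows "y \<in> Cvee n z \<longleftrightarrow> y \<in> Sn n \<and> iota y \<le> iota z \<and> (\<forall>k. iota z k \<le> Suc (iota y k))"
proof -
  have "(\<forall>k\<in>{1..n}. iota z k \<le> iota y k + 1 \<and> iota y k \<le> iota z k) \<longleftrightarrow>
        iota y \<le> iota z \<and> (\<forall>k. iota z k \<le> Suc (iota y k))" if "y \<in> Sn n"
  proof
    assume h: "\<forall>k\<in>{1..n}. iota z k \<le> iota y k + 1 \<and> iota y k \<le> iota z k"
    have "iota y k \<le> iota z k \<and> iota z k \<le> Suc (iota y k)" for k
      using h iota_eq_0_outside[OF that, of k] iota_eq_0_outside[OF assms, of k]
      by (cases "k \<in> {1..n}") auto
    then show "iota y \<le> iota z \<and> (\<forall>k. iota z k \<le> Suc (iota y k))" by (simp add: le_fun_def)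
  qed (auto simp: le_fun_def)
  then show ?thesis unfolding Cvee_def by auto
qed

definition Cvee_code_ge :: "nat \<Rightarrow> (nat \<Rightarrow> nat) \<Rightarrow> (nat \<Rightarrow> nat) \<Rightarrow> (nat \<Rightarrow> nat) set" where
  "Cvee_code_ge n z c = {y \<in> Cvee n z. \<forall>k\<in>{1..n}. c k \<le> kappa y k}"

definition Cvee_code_ge_tables :: "nat \<Rightarrow> (nat \<Rightarrow> nat) \<Rightarrow> (nat \<Rightarrow> nat) \<Rightarrow> (nat \<Rightarrow> nat) set" where
  "Cvee_code_ge_tables n zt c = {t \<in> inv_tables n. t \<le> zt \<and> (\<forall>k. zt k \<le> Suc (t k)) \<and>
     (\<forall>i\<in>{1..n}. c i \<le> kappa (perm_of_table n t) i)}"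

lemma Cvee_code_ge_eq_preimage:
  assumes "z \<in> Sn n"
  shows "Cvee_code_ge n z c = {y \<in> Sn n. iota y \<in> Cvee_code_ge_tables n (iota z) c}"
  using iota_in_inv_tables perm_of_table_iota
  by (auto simp: Cvee_code_ge_tables_def Cvee_code_ge_def Cvee_iff[OF assms])

text \<open>By \<open>kappa_perm_of_table_Suc\<close>, a bound \<open>c\<close> on the code of a table with first entry
  \<open>a\<close> becomes the bound \<^term>\<open>code_bound_tail c a\<close> on the code of its tail.\<close>

definition code_bound_tail :: "(nat \<Rightarrow> nat) \<Rightarrow> nat \<Rightarrow> nat \<Rightarrow> nat" where
  "code_bound_tail c a = (\<lambda>i. if i \<le> a then c i - 1 else c (Suc i))"

lemma code_ge_perm_of_table_SucD:
  assumes "t \<in> inv_tables (Suc m)" and code_ge: "\<forall>i\<in>{1..Suc m}. c i \<le> kappa (perm_of_table (Suc m) t) i"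
  shows "c (Suc (t 1)) = 0"
    and "\<forall>i\<in>{1..m}. code_bound_tail c (t 1) i \<le> kappa (perm_of_table m (tab_tail t)) i"
proof -
  note K = kappa_perm_of_table_Suc[OF assms(1)]
  show "c (Suc (t 1)) = 0" using code_ge K[of "Suc (t 1)"] inv_tables_SucD(2)[OF assms(1)] by force
  show "\<forall>i\<in>{1..m}. code_bound_tail c (t 1) i \<le> kappa (perm_of_table m (tab_tail t)) i"
  proof
    fix i assume i: "i \<in> {1..m}"
    have "c i \<le> kappa (perm_of_table (Suc m) t) i" "c (Suc i) \<le> kappa (perm_of_table (Suc m) t) (Suc i)"
      using i code_ge by auto
    then show "code_bound_tail c (t 1) i \<le> kappa (perm_of_table m (tab_tail t)) i"
      using i K[of i] K[of "Suc i"] by (cases "i \<le> t 1") (auto simp: code_bound_tail_def)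
  qed
qed

lemma code_ge_perm_of_table_Suc_iff:
  assumes "t \<in> inv_tables (Suc m)"
  shows "(\<forall>i\<in>{1..Suc m}. c i \<le> kappa (perm_of_table (Suc m) t) i) \<longleftrightarrow>
    c (Suc (t 1)) = 0 \<and> (\<forall>i\<in>{1..m}. code_bound_tail c (t 1) i \<le> kappa (perm_of_table m (tab_tail t)) i)"
    (is "?lhs \<longleftrightarrow> ?rhs")
proof
  show "?lhs \<Longrightarrow> ?rhs" using code_ge_perm_of_table_SucD[OF assms] by blast
next
  assume ?rhs
  note K = kappa_perm_of_table_Suc[OF assms]
  have t1: "t 1 \<le> m" using inv_tables_SucD(2)[OF assms] .
  show ?lhs
  proof
    fix i assume i: "i \<in> {1..Suc m}"
    consider "i \<le> t 1" | "i = Suc (t 1)" | "Suc (t 1) < i" by linarith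
    then show "c i \<le> kappa (perm_of_table (Suc m) t) i"
    proof cases
      case 1
      then have "i \<in> {1..m}" using i t1 by auto
      then have "code_bound_tail c (t 1) i \<le> kappa (perm_of_table m (tab_tail t)) i"
        using \<open>?rhs\<close> by blast
      then show ?thesis using K[OF i] 1 by (auto simp: code_bound_tail_def)
    next
      case 2 then show ?thesis using \<open>?rhs\<close> by simp
    next
      case 3
      then have "i - 1 \<in> {1..m}" "\<not> i - 1 \<le> t 1" "Suc (i - 1) = i" using i by auto
      moreover from this(1) have
        "code_bound_tail c (t 1) (i - 1) \<le> kappa (perm_of_table m (tab_tail t)) (i - 1)"
        using \<open>?rhs\<close> by blast
      ultimately show ?thesis using K[OF i] 3 by (auto simp: code_bound_tail_def)
    qed
  qed
qed

lemma Cvee_code_ge_tables_Suc_iff: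
  assumes "zt \<in> inv_tables (Suc m)"
  shows "t \<in> Cvee_code_ge_tables (Suc m) zt c \<longleftrightarrow> t 0 = 0 \<and> t 1 \<le> zt 1 \<and> zt 1 \<le> Suc (t 1) \<and>
     c (Suc (t 1)) = 0 \<and> tab_tail t \<in> Cvee_code_ge_tables m (tab_tail zt) (code_bound_tail c (t 1))"
proof -
  have zt: "zt 0 = 0" "zt 1 \<le> m" using assms by (auto simp: inv_tables_Suc_iff)
  have cube: "t \<le> zt \<and> (\<forall>k. zt k \<le> Suc (t k)) \<longleftrightarrow>
      t 1 \<le> zt 1 \<and> zt 1 \<le> Suc (t 1) \<and> tab_tail t \<le> tab_tail zt \<and> (\<forall>k. tab_tail zt k \<le> Suc (tab_tail t k))"
    if "t 0 = 0"
  proof -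
    have all: "(\<forall>k. P k) \<longleftrightarrow> P 0 \<and> P 1 \<and> (\<forall>k. k \<noteq> 0 \<longrightarrow> P (Suc k))" for P :: "nat \<Rightarrow> bool"
      by (metis One_nat_def not0_implies_Suc)
    show ?thesis
      unfolding le_fun_def tab_tail_def all[of "\<lambda>k. t k \<le> zt k"] all[of "\<lambda>k. zt k \<le> Suc (t k)"]
      using that zt(1) by auto
  qed
  show ?thesis
    unfolding Cvee_code_ge_tables_def mem_Collect_eq
    using code_ge_perm_of_table_Suc_iff[of t m c] cube zt(2) inv_tables_Suc_iff[of t m]
    by (auto dest: order.trans[of "t 1"])
qed

lemma code_bound_tail_eq:
  assumes "c a = 0" "c (Suc a) = 0" "a \<ge> 1"
  shows "code_bound_tail c (a - 1) = code_bound_tail c a"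
proof
  fix i show "code_bound_tail c (a - 1) i = code_bound_tail c a i"
    using assms by (cases "i = a") (auto simp: code_bound_tail_def)
qed

lemma admissible_first_entries:
  assumes "A \<noteq> {}" "\<And>a. a \<in> A \<Longrightarrow> a \<le> z \<and> z \<le> Suc a \<and> c (Suc a) = 0"
  obtains alo ahi where "A = {alo..ahi}" "alo \<le> ahi" "ahi \<le> z" "z \<le> Suc alo"
    "\<And>a. a \<in> A \<Longrightarrow> code_bound_tail c a = code_bound_tail c ahi"
proof -
  have two: "a = z - 1 \<or> a = z" if "a \<in> A" for a
    using assms(2)[OF that] by (cases "a = z") auto
  show ?thesis
  proof (cases "z \<ge> 1 \<and> z - 1 \<in> A \<and> z \<in> A")
    case True
    have A_eq: "A = {z - 1..z}"
    proof
      show "A \<subseteq> {z - 1..z}" using two by fastforce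
      show "{z - 1..z} \<subseteq> A"
      proof
        fix x assume "x \<in> {z - 1..z}"
        then have "x = z - 1 \<or> x = z" by auto
        then show "x \<in> A" using True by auto
      qed
    qed
    have "code_bound_tail c (z - 1) = code_bound_tail c z"
      using True assms(2)[of "z - 1"] assms(2)[of z] by (intro code_bound_tail_eq) auto
    then have tail_eq: "code_bound_tail c a = code_bound_tail c z" if "a \<in> A" for a
      using two[OF that] by auto
    show ?thesis by (rule that[OF A_eq _ _ _ tail_eq]) (use True in auto)
  next
    case False
    obtain a where a: "a \<in> A" using assms(1) by blast
    have "b = a" if "b \<in> A" for b
    proof (rule ccontr)
      assume "b \<noteq> a"
      then have "z \<ge> 1 \<and> z - 1 \<in> A \<and> z \<in> A" using two[OF a] two[OF that] a that by auto
      then show False using False by blast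
    qed
    then have "A = {a}" using a by blast
    then show ?thesis using assms(2)[OF a] by (intro that[of a a]) auto
  qed
qed

text \<open>Induction on \<open>n\<close>: the admissible first entries form an interval on which the bound for
  the tail is constant, so the set is an interval times a box of tails.\<close>

lemma unit_box_below_Cvee_code_ge_tables:
  "zt \<in> inv_tables n \<Longrightarrow> unit_box_below zt (Cvee_code_ge_tables n zt c)"
proof (induction n arbitrary: zt c)
  case 0
  then have "Cvee_code_ge_tables 0 zt c = {zt..zt}"
    by (auto simp: Cvee_code_ge_tables_def inv_tables_0)
  then show ?case unfolding unit_box_below_def by (intro disjI2 exI[of _ zt]) auto
next
  case (Suc m)
  define z1 where "z1 = zt 1"
  define zt' where "zt' = tab_tail zt"
  define A where "A = {a. a \<le> z1 \<and> z1 \<le> Suc a \<and> c (Suc a) = 0 \<and>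
    Cvee_code_ge_tables m zt' (code_bound_tail c a) \<noteq> {}}"
  have S_eq: "Cvee_code_ge_tables (Suc m) zt c =
      {t. t 0 = 0 \<and> t 1 \<in> A \<and> tab_tail t \<in> Cvee_code_ge_tables m zt' (code_bound_tail c (t 1))}"
    by (rule set_eqI, unfold Cvee_code_ge_tables_Suc_iff[OF Suc.prems] A_def z1_def zt'_def mem_Collect_eq)
      blast
  show ?case
  proof (cases "A = {}")
    case True
    then show ?thesis using S_eq by (simp add: unit_box_below_def)
  next
    case False
    have "a \<le> z1 \<and> z1 \<le> Suc a \<and> c (Suc a) = 0" if "a \<in> A" for a
      using that by (simp add: A_def)
    then obtain alo ahi where A: "A = {alo..ahi}" "alo \<le> ahi" "ahi \<le> z1" "z1 \<le> Suc alo"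
      and tail: "\<And>a. a \<in> A \<Longrightarrow> code_bound_tail c a = code_bound_tail c ahi"
      using admissible_first_entries[OF False] by blast
    have "Cvee_code_ge_tables m zt' (code_bound_tail c ahi) \<noteq> {}"
      using A by (auto simp: A_def)
    moreover have "unit_box_below zt' (Cvee_code_ge_tables m zt' (code_bound_tail c ahi))"
      using Suc.IH inv_tables_SucD(1)[OF Suc.prems] by (simp add: zt'_def)
    ultimately obtain lo hi where box: "lo \<le> hi" "hi \<le> zt'" "\<And>k. zt' k \<le> Suc (lo k)"
      "Cvee_code_ge_tables m zt' (code_bound_tail c ahi) = {lo..hi}"
      unfolding unit_box_below_def by blast
    have "Cvee_code_ge_tables (Suc m) zt c = {t. t 0 = 0 \<and> t 1 \<in> {alo..ahi} \<and> tab_tail t \<in> {lo..hi}}"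
      unfolding S_eq A(1)[symmetric] using tail box(4) by auto
    moreover have "zt = tab_cons z1 zt'"
      using inv_tables_SucD(3)[OF Suc.prems] by (simp add: z1_def zt'_def)
    moreover have "zt' 0 = 0" by (simp add: zt'_def tab_tail_def)
    ultimately show ?thesis using unit_box_below_tab_cons[OF box(1-3) _ A(2-4)] by simp
  qed
qed

lemma sum_sign_Cvee_code_ge:
  assumes z: "z \<in> Sn n"
  shows "(\<Sum>y\<in>Cvee_code_ge n z c. (-1::complex) ^ (iota_size n z - iota_size n y)) =
    (if card (Cvee_code_ge n z c) = 1
     then (-1) ^ (iota_size n z - iota_size n (THE y. y \<in> Cvee_code_ge n z c)) else 0)"
proof (cases "card (Cvee_code_ge n z c) = 1")
  case True
  then obtain y where "Cvee_code_ge n z c = {y}" by (rule card_1_singletonE)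
  then show ?thesis by simp
next
  case False
  let ?S = "Cvee_code_ge_tables n (iota z) c"
  have zt: "iota z \<in> inv_tables n" by (rule iota_in_inv_tables[OF z])
  have bij: "bij_betw iota (Cvee_code_ge n z c) ?S"
    unfolding Cvee_code_ge_eq_preimage[OF z]
    by (rule bij_betw_iota_preimage) (auto simp: Cvee_code_ge_tables_def)
  have "(\<Sum>y\<in>Cvee_code_ge n z c. (-1::complex) ^ (iota_size n z - iota_size n y))
      = (\<Sum>t\<in>?S. (-1) ^ (table_size n (iota z) - table_size n t))"
    by (simp add: sum.reindex_bij_betw[OF bij, symmetric] iota_size_eq_table_size)
  also have "\<dots> = 0"
    using sum_sign_unit_box_below_eq_0[OF zt unit_box_below_Cvee_code_ge_tables[OF zt]] False
      bij_betw_same_card[OF bij] by simp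
  finally show ?thesis using False by simp
qed

lemma eq_min_Suc_iff:
  fixes f g :: "'a \<Rightarrow> nat"
  shows "f = (\<lambda>k. min (Suc (f k)) (g k)) \<longleftrightarrow> f = g"
proof
  assume eq: "f = (\<lambda>k. min (Suc (f k)) (g k))"
  have "f k = g k" for k
  proof -
    have "f k = min (Suc (f k)) (g k)" using fun_cong[OF eq, of k] by (simp only:)
    then show ?thesis by (simp add: min_def split: if_splits)
  qed
  then show "f = g" by blast
qed (auto simp: min_def)

text \<open>This says that the Moebius function of the inversion table order is
  \<open>\<mu>(y, z) = (-1)^(|\<iota>(z)| - |\<iota>(y)|)\<close> for \<open>y \<in> C\<^sub>z\<^sup>\<or>\<close> and \<open>0\<close> otherwise.\<close>

lemma sum_sign_Cvee_below:
  assumes y: "y \<in> Sn n" and u: "u \<in> Sn n"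
  shows "(\<Sum>z\<in>{z \<in> Sn n. iota z \<le> iota u \<and> y \<in> Cvee n z}. (-1::complex) ^ (iota_size n z - iota_size n y))
    = (if y = u then 1 else 0)"
proof (cases "iota y \<le> iota u")
  case False
  have "\<not> (iota z \<le> iota u \<and> y \<in> Cvee n z)" if "z \<in> Sn n" for z
    using False Cvee_iff[OF that] order.trans by blast
  then have empty: "{z \<in> Sn n. iota z \<le> iota u \<and> y \<in> Cvee n z} = {}" by blast
  show ?thesis unfolding empty using False by auto
next
  case True
  define ty where "ty = iota y"
  define hi where "hi = (\<lambda>k. min (Suc (ty k)) (iota u k))"
  have hi_table: "hi \<in> inv_tables n"
    by (rule inv_tables_downward_closed[OF iota_in_inv_tables[OF u]]) (simp add: hi_def le_fun_def)
  have ty_table: "ty \<in> inv_tables n" unfolding ty_def by (rule iota_in_inv_tables[OF y])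
  have ty_hi: "ty \<le> hi" using True by (simp add: hi_def ty_def le_fun_def)
  have box: "{z \<in> Sn n. iota z \<le> iota u \<and> y \<in> Cvee n z} = {z \<in> Sn n. iota z \<in> {ty..hi}}"
    using Cvee_iff y by (auto simp: hi_def ty_def le_fun_def)
  have bij: "bij_betw iota {z \<in> Sn n. iota z \<in> {ty..hi}} {ty..hi}"
    by (rule bij_betw_iota_preimage) (use inv_tables_downward_closed[OF hi_table] in auto)
  have "(\<Sum>z\<in>{z \<in> Sn n. iota z \<le> iota u \<and> y \<in> Cvee n z}. (-1::complex) ^ (iota_size n z - iota_size n y))
      = (\<Sum>z\<in>{z \<in> Sn n. iota z \<in> {ty..hi}}. (-1) ^ (table_size n (iota z) - table_size n ty))"
    unfolding box by (simp only: iota_size_eq_table_size ty_def)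
  also have "\<dots> = (\<Sum>s\<in>{ty..hi}. (-1) ^ (table_size n s - table_size n ty))"
    by (rule sum.reindex_bij_betw[OF bij])
  also have "\<dots> = (\<Sum>s\<in>{ty..hi}. (-1) ^ table_size n s) * (-1) ^ table_size n ty"
    unfolding sum_distrib_right by (intro sum.cong refl minus_one_power_diff table_size_mono) auto
  also have "\<dots> = (if ty = hi then 1 else 0)"
  proof -
    have unit: "hi k \<le> Suc (ty k)" for k by (simp add: hi_def)
    have outside: "ty k = hi k" if "k \<notin> {1..n}" for k
      using inv_tables_eq_0_outside[OF ty_table that] inv_tables_eq_0_outside[OF hi_table that] by simp
    show ?thesis
      using sum_sign_unit_box[where 'a = complex and n = n, OF ty_hi unit outside]
      by (simp add: power_mult_distrib[symmetric])
  qed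
  also have "ty = hi \<longleftrightarrow> y = u"
    unfolding hi_def ty_def eq_min_Suc_iff using inj_onD[OF inj_on_iota] y u by blast
  finally show ?thesis .
qed

lemma sum_sign_Cvee_code_ge_below:
  assumes u: "u \<in> Sn n"
  shows "(\<Sum>z\<in>{z \<in> Sn n. iota z \<le> iota u}. \<Sum>y\<in>Cvee_code_ge n z c. (-1::complex) ^ (iota_size n z - iota_size n y))
    = (if \<forall>k\<in>{1..n}. c k \<le> kappa u k then 1 else 0)"
proof -
  let ?sign = "\<lambda>z y. (-1::complex) ^ (iota_size n z - iota_size n y)"
  let ?code_ge = "\<lambda>y. \<forall>k\<in>{1..n}. c k \<le> kappa y k"
  have "Cvee_code_ge n z c = {y \<in> Sn n. y \<in> Cvee n z \<and> ?code_ge y}" if "z \<in> Sn n" for z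
    using Cvee_iff[OF that] by (auto simp: Cvee_code_ge_def)
  then have "(\<Sum>z\<in>{z \<in> Sn n. iota z \<le> iota u}. \<Sum>y\<in>Cvee_code_ge n z c. ?sign z y)
      = (\<Sum>z\<in>{z \<in> Sn n. iota z \<le> iota u}. \<Sum>y\<in>{y \<in> Sn n. y \<in> Cvee n z \<and> ?code_ge y}. ?sign z y)"
    by (intro sum.cong refl) auto
  also have "\<dots> = (\<Sum>y\<in>Sn n. \<Sum>z\<in>{z \<in> {z \<in> Sn n. iota z \<le> iota u}. y \<in> Cvee n z \<and> ?code_ge y}. ?sign z y)"
    by (rule sum.swap_restrict) (simp_all add: finite_Sn)
  also have "\<dots> = (\<Sum>y\<in>Sn n. if ?code_ge y \<and> y = u then 1 else 0)"
  proof (intro sum.cong refl)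
    fix y assume y: "y \<in> Sn n"
    show "(\<Sum>z\<in>{z \<in> {z \<in> Sn n. iota z \<le> iota u}. y \<in> Cvee n z \<and> ?code_ge y}. ?sign z y)
        = (if ?code_ge y \<and> y = u then 1 else 0)"
    proof (cases "?code_ge y")
      case True
      then have Z: "{z \<in> {z \<in> Sn n. iota z \<le> iota u}. y \<in> Cvee n z \<and> ?code_ge y}
          = {z \<in> Sn n. iota z \<le> iota u \<and> y \<in> Cvee n z}" by auto
      show ?thesis unfolding Z using sum_sign_Cvee_below[OF y u] True by simp
    next
      case False
      then have Z: "{z \<in> {z \<in> Sn n. iota z \<le> iota u}. y \<in> Cvee n z \<and> ?code_ge y} = {}" by auto
      show ?thesis unfolding Z using False by simp
    qed
  qed
  also have "\<dots> = (\<Sum>y\<in>Sn n. if y = u then (if ?code_ge u then 1 else 0) else 0)"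
    by (intro sum.cong refl) auto
  also have "\<dots> = (if ?code_ge u then 1 else 0)"
    using u by (simp add: sum.delta[OF finite_Sn])
  finally show ?thesis .
qed

section \<open>Additive characters\<close>

definition add_subgroup :: "'a::ab_group_add set \<Rightarrow> bool" where
  "add_subgroup M \<longleftrightarrow> 0 \<in> M \<and> (\<forall>a\<in>M. \<forall>b\<in>M. a + b \<in> M) \<and> (\<forall>a\<in>M. - a \<in> M)"

lemma add_subgroup_of_int_mult:
  fixes a :: "'a::ring_1"
  assumes "add_subgroup M" "a \<in> M"
  shows "of_int k * a \<in> M"
proof (induction k rule: int_induct[where k = 0])
  case base then show ?case using assms(1) by (simp add: add_subgroup_def)
next
  case (step1 i) then show ?case using assms by (simp add: add_subgroup_def distrib_right)
next
  case (step2 i)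
  have eq: "of_int (i - 1) * a = of_int i * a + - a" by (simp add: algebra_simps)
  have "of_int i * a + - a \<in> M" using step2 assms unfolding add_subgroup_def by blast
  then show ?case unfolding eq .
qed

lemma prime_CHAR_finite_field:
  "prime CHAR('a::{finite,field})"
  using prime_CHAR_semidom finite_imp_CHAR_pos[OF finite_UNIV] by blast

lemma of_int_inverse_exists:
  assumes "of_int k \<noteq> (0::'a::{finite,field})"
  obtains k' where "of_int k' * of_int k = (1::'a)"
proof -
  define p where "p = CHAR('a)"
  have "prime (int p)" using prime_CHAR_finite_field by (simp add: p_def)
  moreover have "\<not> int p dvd k" using assms by (simp add: of_int_eq_0_iff_char_dvd p_def)
  ultimately have "coprime (int p) k" by (rule prime_imp_coprime)
  then obtain u v where "u * k + v * int p = 1"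
    using bezout_int[of k "int p"] by (auto simp: coprime_iff_gcd_eq_1 gcd.commute)
  then have "of_int (u * k + v * int p) = (1::'a)" by simp
  then have "of_int u * of_int k = (1::'a)" by (simp add: p_def)
  then show ?thesis by (rule that)
qed

lemma maximal_add_subgroup_avoiding:
  fixes e :: "'a::{finite,ab_group_add}"
  assumes "e \<noteq> 0"
  obtains M where "add_subgroup M" "e \<notin> M"
    "\<And>M'. add_subgroup M' \<Longrightarrow> M \<subseteq> M' \<Longrightarrow> e \<notin> M' \<Longrightarrow> M' = M"
proof -
  define P where "P = (\<lambda>k. \<exists>M::'a set. add_subgroup M \<and> e \<notin> M \<and> card M = k)"
  have "P (card {0::'a})"
    unfolding P_def using assms by (intro exI[of _ "{0}"]) (simp add: add_subgroup_def)
  moreover have "\<forall>k. P k \<longrightarrow> k \<le> card (UNIV::'a set)"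
  proof (intro allI impI)
    fix k assume "P k"
    then obtain M :: "'a set" where "card M = k" unfolding P_def by blast
    then show "k \<le> card (UNIV::'a set)" using card_mono[OF finite_UNIV subset_UNIV, of M] by simp
  qed
  ultimately have "\<exists>k. P k \<and> (\<forall>k'. P k' \<longrightarrow> k' \<le> k)" by (rule Nat.ex_has_greatest_nat)
  then obtain k where k: "P k" "\<And>k'. P k' \<Longrightarrow> k' \<le> k" by blast
  then obtain M where M: "add_subgroup M" "e \<notin> M" "card M = k" unfolding P_def by blast
  show ?thesis
  proof (rule that[OF M(1,2)])
    fix M' assume M': "add_subgroup M'" "M \<subseteq> M'" "e \<notin> M'"
    then have "card M' \<le> card M" using k(2)[of "card M'"] M(3) unfolding P_def by blast
    moreover have "card M \<le> card M'" using M'(2) by (simp add: card_mono)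
    ultimately show "M' = M" using M'(2) by (intro card_subset_eq[symmetric]) simp_all
  qed
qed

lemma maximal_add_subgroup_avoiding_decomp:
  fixes e :: "'a::{finite,field}"
  assumes M: "add_subgroup M" "e \<notin> M"
    and max: "\<And>M'. add_subgroup M' \<Longrightarrow> M \<subseteq> M' \<Longrightarrow> e \<notin> M' \<Longrightarrow> M' = M"
  obtains m k where "m \<in> M" "t = m + of_int k * e"
proof (cases "t \<in> M")
  case True
  then show ?thesis using that[of t 0] by simp
next
  case False
  have M_closed: "0 \<in> M" "\<And>a b. a \<in> M \<Longrightarrow> b \<in> M \<Longrightarrow> a + b \<in> M" "\<And>a. a \<in> M \<Longrightarrow> - a \<in> M"
    using M(1) by (auto simp: add_subgroup_def)
  define Mt where "Mt = {m + of_int k * t | m k. m \<in> M}"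
  have "add_subgroup Mt"
    unfolding add_subgroup_def
  proof (intro conjI ballI)
    show "0 \<in> Mt" unfolding Mt_def using M_closed(1) by (intro CollectI exI[of _ 0]) auto
  next
    fix a b assume "a \<in> Mt" "b \<in> Mt"
    then obtain m1 k1 m2 k2 where "a = m1 + of_int k1 * t" "m1 \<in> M" "b = m2 + of_int k2 * t" "m2 \<in> M"
      unfolding Mt_def by blast
    then show "a + b \<in> Mt" unfolding Mt_def using M_closed(2)
      by (intro CollectI exI[of _ "m1 + m2"] exI[of _ "k1 + k2"]) (auto simp: algebra_simps)
  next
    fix a assume "a \<in> Mt"
    then obtain m1 k1 where "a = m1 + of_int k1 * t" "m1 \<in> M" unfolding Mt_def by blast
    then show "- a \<in> Mt" unfolding Mt_def using M_closed(3)
      by (intro CollectI exI[of _ "- m1"] exI[of _ "- k1"]) auto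
  qed
  moreover have "M \<subseteq> Mt" unfolding Mt_def by (force intro: exI[of _ 0])
  moreover have "t \<in> Mt" unfolding Mt_def using M_closed(1) by (intro CollectI exI[of _ 0] exI[of _ 1]) auto
  ultimately have "e \<in> Mt" using max False by blast
  then obtain m k where mk: "e = m + of_int k * t" "m \<in> M" unfolding Mt_def by blast
  then have "of_int k \<noteq> (0::'a)" using M(2) by auto
  then obtain k' where k': "of_int k' * of_int k = (1::'a)" by (rule of_int_inverse_exists)
  have "t = of_int (- k') * m + of_int k' * e" using mk k' by (simp add: algebra_simps)
  then show ?thesis using that add_subgroup_of_int_mult[OF M(1) mk(2)] by blast
qed

lemma maximal_add_subgroup_avoiding_unique:
  fixes e :: "'a::{finite,field}"
  assumes M: "add_subgroup M" "e \<notin> M" and m: "m1 \<in> M" "m2 \<in> M"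
    and eq: "m1 + of_int k1 * e = m2 + of_int k2 * e"
  shows "int CHAR('a) dvd k1 - k2"
proof (rule ccontr)
  assume "\<not> int CHAR('a) dvd k1 - k2"
  then have "of_int (k1 - k2) \<noteq> (0::'a)" using of_int_eq_0_iff_char_dvd[where 'a = 'a, of "k1 - k2"] by blast
  then obtain j where j: "of_int j * of_int (k1 - k2) = (1::'a)" by (rule of_int_inverse_exists)
  have "of_int (k1 - k2) * e = m2 + - m1" using eq by (simp add: algebra_simps)
  moreover have "m2 + - m1 \<in> M" using M(1) m unfolding add_subgroup_def by blast
  ultimately have "of_int j * (of_int (k1 - k2) * e) \<in> M"
    using add_subgroup_of_int_mult[OF M(1)] by metis
  then have "e \<in> M" using j by (simp add: mult.assoc[symmetric])
  then show False using M(2) by simp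
qed

lemma cis_2pi_div_cong:
  assumes "int p dvd k1 - k2" "p \<noteq> 0"
  shows "cis (2 * pi * of_int k1 / real p) = cis (2 * pi * of_int k2 / real p)"
proof -
  obtain j where j: "k1 - k2 = int p * j" using assms(1) by (elim dvdE)
  have "2 * pi * of_int k1 / real p = 2 * pi * of_int k2 / real p + 2 * pi * of_int j"
    using j assms(2) by (simp add: field_simps)
  then show ?thesis by (simp only: cis_mult[symmetric]) simp
qed

lemma cis_2pi_div_ne_1:
  assumes "p \<ge> 2"
  shows "cis (2 * pi / real p) \<noteq> 1"
proof
  assume "cis (2 * pi / real p) = 1"
  then have "cos (2 * pi / real p) = 1" by (metis cis.sel(1) one_complex.sel(1))
  then obtain j :: int where "2 * pi / real p = of_int j * 2 * pi" by (auto simp: cos_one_2pi_int)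
  then have "1 = of_int j * real p" using assms by (simp add: field_simps)
  then have "1 = j * int p" by (metis of_int_1 of_int_eq_iff of_int_mult of_int_of_nat_eq)
  then have "int p dvd 1" by (metis dvd_triv_right)
  then show False using assms by (simp add: zdvd1_eq)
qed

text \<open>The classical construction: \<open>e\<close> spans a complement of size \<open>p\<close> to a maximal subgroup \<open>M\<close>
  avoiding it, and \<open>m + k e \<mapsto> exp (2 \<pi> i k / p)\<close> is well defined.\<close>

lemma additive_character_exists:
  fixes e :: "'a::{finite,field}"
  assumes "e \<noteq> 0"
  obtains \<theta> :: "'a \<Rightarrow> complex" where "\<theta> 0 = 1" "\<And>a b. \<theta> (a + b) = \<theta> a * \<theta> b" "\<theta> e \<noteq> 1"
proof -
  define p where "p = CHAR('a)"
  have p: "p \<ge> 2" using prime_CHAR_finite_field prime_ge_2_nat unfolding p_def by blast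
  obtain M where M: "add_subgroup M" "e \<notin> M"
    and max: "\<And>M'. add_subgroup M' \<Longrightarrow> M \<subseteq> M' \<Longrightarrow> e \<notin> M' \<Longrightarrow> M' = M"
    using maximal_add_subgroup_avoiding[OF assms] by blast
  have M_closed: "0 \<in> M" "\<And>a b. a \<in> M \<Longrightarrow> b \<in> M \<Longrightarrow> a + b \<in> M"
    using M(1) by (auto simp: add_subgroup_def)
  have decomp: "\<exists>k::int. \<exists>m\<in>M. t = m + of_int k * e" for t
  proof -
    obtain m k where "m \<in> M" "t = m + of_int k * e"
      by (rule maximal_add_subgroup_avoiding_decomp[OF M max])
    then show ?thesis by (intro exI[of _ k] bexI[of _ m])
  qed
  define idx where "idx t = (SOME k::int. \<exists>m\<in>M. t = m + of_int k * e)" for t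
  have idx: "\<exists>m\<in>M. t = m + of_int (idx t) * e" for t
    unfolding idx_def by (rule someI_ex[OF decomp])
  define \<theta> where "\<theta> t = cis (2 * pi * of_int (idx t) / real p)" for t
  have \<theta>_eq: "\<theta> t = cis (2 * pi * of_int k / real p)" if "m \<in> M" "t = m + of_int k * e" for t m k
  proof -
    obtain m' where "m' \<in> M" "t = m' + of_int (idx t) * e" using idx by blast
    then have "int p dvd idx t - k"
      using maximal_add_subgroup_avoiding_unique[OF M \<open>m' \<in> M\<close> that(1)] that(2) unfolding p_def by simp
    then show ?thesis unfolding \<theta>_def using p by (intro cis_2pi_div_cong) auto
  qed
  show ?thesis
  proof (rule that)
    show "\<theta> 0 = 1" using \<theta>_eq[OF M_closed(1), of 0 0] by simp
    show "\<theta> e \<noteq> 1" using \<theta>_eq[OF M_closed(1), of e 1] cis_2pi_div_ne_1[OF p] by simp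
    fix a b
    obtain m1 k1 m2 k2 where m: "m1 \<in> M" "a = m1 + of_int k1 * e" "m2 \<in> M" "b = m2 + of_int k2 * e"
      using decomp by meson
    then have "a + b = (m1 + m2) + of_int (k1 + k2) * e" by (simp add: algebra_simps)
    then have "\<theta> (a + b) = cis (2 * pi * of_int (k1 + k2) / real p)"
      using \<theta>_eq M_closed(2)[OF m(1,3)] by blast
    also have "\<dots> = cis (2 * pi * of_int k1 / real p) * cis (2 * pi * of_int k2 / real p)"
      by (simp add: cis_mult add_divide_distrib distrib_left)
    finally show "\<theta> (a + b) = \<theta> a * \<theta> b" using \<theta>_eq[OF m(1,2)] \<theta>_eq[OF m(3,4)] by simp
  qed
qed

definition characters :: "'g::ab_group_add set \<Rightarrow> ('g \<Rightarrow> complex) set" where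
  "characters U = {\<psi>. \<psi> 0 = 1 \<and> (\<forall>x\<in>U. \<forall>y\<in>U. \<psi> (x + y) = \<psi> x * \<psi> y) \<and> (\<forall>x. x \<notin> U \<longrightarrow> \<psi> x = 0)}"

definition characters_trivial_on :: "'g::ab_group_add set \<Rightarrow> 'g set \<Rightarrow> ('g \<Rightarrow> complex) set" where
  "characters_trivial_on U H = {\<psi> \<in> characters U. \<forall>h\<in>H. \<psi> h = 1}"

lemma charactersD:
  assumes "\<psi> \<in> characters U"
  shows "\<psi> 0 = 1" "\<And>x y. x \<in> U \<Longrightarrow> y \<in> U \<Longrightarrow> \<psi> (x + y) = \<psi> x * \<psi> y" "\<And>x. x \<notin> U \<Longrightarrow> \<psi> x = 0"
  using assms by (auto simp: characters_def)

lemma character_uminus_mult: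
  assumes "\<psi> \<in> characters U" "add_subgroup U" "x \<in> U"
  shows "\<psi> (- x) * \<psi> x = 1"
proof -
  have "- x \<in> U" using assms(2,3) unfolding add_subgroup_def by blast
  then have "\<psi> (- x + x) = \<psi> (- x) * \<psi> x" by (rule charactersD(2)[OF assms(1) _ assms(3)])
  then show ?thesis using charactersD(1)[OF assms(1)] by simp
qed

lemma character_nonzero:
  assumes "\<psi> \<in> characters U" "add_subgroup U" "x \<in> U"
  shows "\<psi> x \<noteq> 0"
proof
  assume "\<psi> x = 0"
  then show False using character_uminus_mult[OF assms] by simp
qed

lemma bij_betw_add_right:
  assumes "add_subgroup U" "y \<in> U"
  shows "bij_betw (\<lambda>x. x + y) U U"
proof (rule bij_betw_byWitness[where f' = "\<lambda>x. x + - y"])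
  have closed: "\<And>a b. a \<in> U \<Longrightarrow> b \<in> U \<Longrightarrow> a + b \<in> U" "\<And>a. a \<in> U \<Longrightarrow> - a \<in> U"
    using assms(1) unfolding add_subgroup_def by blast+
  then show "(\<lambda>x. x + y) ` U \<subseteq> U" "(\<lambda>x. x + - y) ` U \<subseteq> U" using assms(2) by blast+
qed simp_all

lemma character_power_card:
  assumes "\<psi> \<in> characters U" "add_subgroup U" "finite U" "x \<in> U"
  shows "\<psi> x ^ card U = 1"
proof -
  have "(\<Prod>y\<in>U. \<psi> y) = (\<Prod>y\<in>U. \<psi> (y + x))"
    using prod.reindex_bij_betw[OF bij_betw_add_right[OF assms(2,4)], of \<psi>] by simp
  also have "\<dots> = \<psi> x ^ card U * (\<Prod>y\<in>U. \<psi> y)"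
    using charactersD(2)[OF assms(1) _ assms(4)] by (simp add: prod.distrib mult.commute)
  finally have "(\<psi> x ^ card U - 1) * (\<Prod>y\<in>U. \<psi> y) = 0" by (simp add: algebra_simps)
  moreover have "(\<Prod>y\<in>U. \<psi> y) \<noteq> 0" using character_nonzero[OF assms(1,2)] assms(3) by simp
  ultimately show ?thesis by simp
qed

lemma finite_characters:
  assumes "add_subgroup U" "finite U"
  shows "finite (characters U)"
proof -
  have "card U \<ge> 1" using assms by (auto simp: add_subgroup_def Suc_le_eq card_gt_0_iff)
  then have "finite {z::complex. z ^ card U = 1}" by (rule finite_roots_unity)
  then have "finite (PiE U (\<lambda>_. {z::complex. z ^ card U = 1}))" using assms(2) by (rule finite_PiE[rotated])
  moreover have "(\<lambda>\<psi>. restrict \<psi> U) ` characters U \<subseteq> PiE U (\<lambda>_. {z. z ^ card U = 1})"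
    using character_power_card[OF _ assms(1,2)] by auto
  moreover have "inj_on (\<lambda>\<psi>. restrict \<psi> U) (characters U)"
  proof (rule inj_onI)
    fix \<psi> \<phi> assume \<psi>: "\<psi> \<in> characters U" and \<phi>: "\<phi> \<in> characters U"
      and eq: "restrict \<psi> U = restrict \<phi> U"
    show "\<psi> = \<phi>"
    proof
      fix x show "\<psi> x = \<phi> x"
        using fun_cong[OF eq, of x] charactersD(3)[OF \<psi>, of x] charactersD(3)[OF \<phi>, of x]
        by (cases "x \<in> U") simp_all
    qed
  qed
  ultimately show ?thesis by (metis finite_imageD finite_subset)
qed

lemma character_mult_in_characters:
  assumes "\<psi> \<in> characters U" "\<phi> \<in> characters U"
  shows "(\<lambda>x. \<psi> x * \<phi> x) \<in> characters U"
  using charactersD[OF assms(1)] charactersD[OF assms(2)] by (simp add: characters_def mult_ac)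

lemma character_divide_in_characters:
  assumes "\<psi> \<in> characters U" "\<phi> \<in> characters U" "add_subgroup U"
  shows "(\<lambda>x. \<psi> x / \<phi> x) \<in> characters U"
  using charactersD[OF assms(1)] charactersD[OF assms(2)] character_nonzero[OF assms(2,3)]
  by (simp add: characters_def)

lemma sum_character:
  assumes "\<psi> \<in> characters U" "add_subgroup U"
  shows "(\<Sum>x\<in>U. \<psi> x) = (if \<psi> = (\<lambda>x. if x \<in> U then 1 else 0) then of_nat (card U) else 0)"
proof (cases "\<exists>y\<in>U. \<psi> y \<noteq> 1")
  case True
  then obtain y where y: "y \<in> U" "\<psi> y \<noteq> 1" by blast
  have "(\<Sum>x\<in>U. \<psi> x) = (\<Sum>x\<in>U. \<psi> (x + y))"
    using sum.reindex_bij_betw[OF bij_betw_add_right[OF assms(2) y(1)], of \<psi>] by simp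
  also have "\<dots> = \<psi> y * (\<Sum>x\<in>U. \<psi> x)"
    using charactersD(2)[OF assms(1) _ y(1)] by (simp add: sum_distrib_left mult.commute)
  finally have "(1 - \<psi> y) * (\<Sum>x\<in>U. \<psi> x) = 0" by (simp add: algebra_simps)
  then show ?thesis using y by auto
next
  case False
  then have "\<psi> = (\<lambda>x. if x \<in> U then 1 else 0)" using charactersD(3)[OF assms(1)] by (auto simp: fun_eq_iff)
  then show ?thesis by simp
qed

lemma sum_characters_trivial_on_eq_0:
  assumes U: "add_subgroup U" and "y \<in> U"
    and \<psi>\<^sub>0: "\<psi>\<^sub>0 \<in> characters_trivial_on U H" "\<psi>\<^sub>0 y \<noteq> 1"
  shows "(\<Sum>\<psi>\<in>characters_trivial_on U H. \<psi> y) = 0"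
proof -
  let ?D = "characters_trivial_on U H"
  have \<psi>\<^sub>0_char: "\<psi>\<^sub>0 \<in> characters U" and \<psi>\<^sub>0_H: "\<And>h. h \<in> H \<Longrightarrow> \<psi>\<^sub>0 h = 1"
    using \<psi>\<^sub>0(1) by (auto simp: characters_trivial_on_def)
  have bij: "bij_betw (\<lambda>\<psi> x. \<psi>\<^sub>0 x * \<psi> x) ?D ?D"
  proof (rule bij_betw_byWitness[where f' = "\<lambda>\<psi> x. \<psi> x / \<psi>\<^sub>0 x"])
    show "\<forall>\<psi>\<in>?D. (\<lambda>x. \<psi>\<^sub>0 x * \<psi> x / \<psi>\<^sub>0 x) = \<psi>" "\<forall>\<psi>\<in>?D. (\<lambda>x. \<psi>\<^sub>0 x * (\<psi> x / \<psi>\<^sub>0 x)) = \<psi>"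
      using character_nonzero[OF \<psi>\<^sub>0_char U] charactersD(3)
      by (auto simp: characters_trivial_on_def fun_eq_iff)
    show "(\<lambda>\<psi> x. \<psi>\<^sub>0 x * \<psi> x) ` ?D \<subseteq> ?D" "(\<lambda>\<psi> x. \<psi> x / \<psi>\<^sub>0 x) ` ?D \<subseteq> ?D"
      using character_mult_in_characters[OF \<psi>\<^sub>0_char] character_divide_in_characters[OF _ \<psi>\<^sub>0_char U] \<psi>\<^sub>0_H
      by (auto simp: characters_trivial_on_def)
  qed
  have "(\<Sum>\<psi>\<in>?D. \<psi> y) = (\<Sum>\<psi>\<in>?D. \<psi>\<^sub>0 y * \<psi> y)"
    using sum.reindex_bij_betw[OF bij, of "\<lambda>\<psi>. \<psi> y"] by simp
  also have "\<dots> = \<psi>\<^sub>0 y * (\<Sum>\<psi>\<in>?D. \<psi> y)" by (rule sum_distrib_left[symmetric])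
  finally have "(1 - \<psi>\<^sub>0 y) * (\<Sum>\<psi>\<in>?D. \<psi> y) = 0" by (simp add: algebra_simps)
  then show ?thesis using \<psi>\<^sub>0(2) by simp
qed

lemma sum_characters_trivial_on_point:
  assumes U: "add_subgroup U" and "y \<in> U"
    and separating: "\<And>y. y \<in> U \<Longrightarrow> y \<notin> H \<Longrightarrow> \<exists>\<psi>\<in>characters_trivial_on U H. \<psi> y \<noteq> 1"
  shows "(\<Sum>\<psi>\<in>characters_trivial_on U H. \<psi> y) = (if y \<in> H then of_nat (card (characters_trivial_on U H)) else 0)"
  using sum_characters_trivial_on_eq_0[OF U \<open>y \<in> U\<close>] separating[OF \<open>y \<in> U\<close>]
  by (auto simp: characters_trivial_on_def)

lemma card_characters_trivial_on:
  assumes U: "add_subgroup U" "finite U" and H: "H \<subseteq> U"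
    and separating: "\<And>y. y \<in> U \<Longrightarrow> y \<notin> H \<Longrightarrow> \<exists>\<psi>\<in>characters_trivial_on U H. \<psi> y \<noteq> 1"
  shows "card (characters_trivial_on U H) * card H = card U"
proof -
  let ?D = "characters_trivial_on U H"
  let ?one = "\<lambda>x. if x \<in> U then 1 else 0 :: complex"
  have D_finite: "finite ?D"
    using finite_characters[OF U] by (rule rev_finite_subset) (auto simp: characters_trivial_on_def)
  have one_in_D: "?one \<in> ?D"
    using U(1) H by (auto simp: characters_trivial_on_def characters_def add_subgroup_def)
  have "of_nat (card ?D * card H) = (\<Sum>y\<in>U. if y \<in> H then of_nat (card ?D) else (0::complex))"
    using H U(2) by (simp add: sum.If_cases Int_absorb1)
  also have "\<dots> = (\<Sum>y\<in>U. \<Sum>\<psi>\<in>?D. \<psi> y)"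
    using sum_characters_trivial_on_point[OF U(1) _ separating] by simp
  also have "\<dots> = (\<Sum>\<psi>\<in>?D. \<Sum>y\<in>U. \<psi> y)" by (rule sum.swap)
  also have "\<dots> = (\<Sum>\<psi>\<in>?D. if \<psi> = ?one then of_nat (card U) else 0)"
    using sum_character[OF _ U(1)] by (intro sum.cong refl) (simp add: characters_trivial_on_def)
  also have "\<dots> = of_nat (card U)" using one_in_D D_finite by (simp add: sum.delta)
  finally show ?thesis by (simp only: of_nat_eq_iff)
qed

lemma sum_characters_trivial_on:
  assumes U: "add_subgroup U" "finite U" and H: "add_subgroup H" "H \<subseteq> U"
    and separating: "\<And>y. y \<in> U \<Longrightarrow> y \<notin> H \<Longrightarrow> \<exists>\<psi>\<in>characters_trivial_on U H. \<psi> y \<noteq> 1"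
  shows "(\<Sum>\<psi>\<in>characters_trivial_on U H. \<psi> x) = (if x \<in> H then of_nat (card U) / of_nat (card H) else 0)"
proof -
  let ?D = "characters_trivial_on U H"
  have "card H \<noteq> 0" using H U(2) by (auto simp: add_subgroup_def finite_subset)
  then have card_D: "of_nat (card ?D) = (of_nat (card U) / of_nat (card H) :: complex)"
    using card_characters_trivial_on[OF U H(2) separating] by (simp add: field_simps flip: of_nat_mult)
  show ?thesis
  proof (cases "x \<in> U")
    case True
    then show ?thesis using sum_characters_trivial_on_point[OF U(1) True separating] card_D by simp
  next
    case False
    then have "(\<Sum>\<psi>\<in>?D. \<psi> x) = 0"
      by (intro sum.neutral) (auto simp: characters_trivial_on_def dest: charactersD(3))
    then show ?thesis using False H(2) by auto
  qed
qed

section \<open>Characters of \<open>ut\<^sub>n\<close>\<close>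

lemma ut_iff: "x \<in> ut n \<longleftrightarrow> (\<forall>i j. \<not> (1 \<le> i \<and> i < j \<and> j \<le> n) \<longrightarrow> x i j = 0)"
  by (auto simp: ut_def)

lemma utw_iff:
  "x \<in> utw n w \<longleftrightarrow> x \<in> ut n \<and> (\<forall>i j. \<not> (0 < j - i \<and> j - i \<le> iota w i) \<longrightarrow> x i j = 0)"
  by (auto simp: utw_def)

lemma add_subgroup_ut: "add_subgroup (ut n)"
  by (auto simp: add_subgroup_def ut_iff)

lemma utw_subset_ut: "utw n w \<subseteq> ut n"
  by (auto simp: utw_def)

lemma add_subgroup_utw: "add_subgroup (utw n w)"
  by (auto simp: add_subgroup_def utw_iff ut_iff)

lemma finite_ut: "finite (ut n :: (nat \<Rightarrow> nat \<Rightarrow> 'a::{finite,field}) set)"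
proof -
  define B where "B = {1..n} \<times> {1..n}"
  define f where "f = (\<lambda>x::nat \<Rightarrow> nat \<Rightarrow> 'a. restrict (\<lambda>(i, j). x i j) B)"
  have "inj_on f (ut n)"
  proof (rule inj_onI)
    fix x y assume x: "x \<in> ut n" and y: "y \<in> ut n" and eq: "f x = f y"
    show "x = y"
    proof (intro ext)
      fix i j show "x i j = y i j"
        using fun_cong[OF eq, of "(i, j)"] x y by (cases "(i, j) \<in> B") (auto simp: f_def B_def ut_iff)
    qed
  qed
  moreover have "f ` ut n \<subseteq> PiE B (\<lambda>_. UNIV)" unfolding f_def by auto
  moreover have "finite (PiE B (\<lambda>_. UNIV :: 'a set))" by (rule finite_PiE) (simp_all add: B_def)
  ultimately show ?thesis by (metis finite_imageD finite_subset)
qed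

lemma irr_eq_characters: "irr n = characters (ut n)"
  by (auto simp: irr_def characters_def)

lemma finite_irr: "finite (irr n :: ((nat \<Rightarrow> nat \<Rightarrow> 'a::{finite,field}) \<Rightarrow> complex) set)"
  unfolding irr_eq_characters by (rule finite_characters[OF add_subgroup_ut finite_ut])

lemma irr_kernel_eq_characters_trivial_on:
  "{\<psi> \<in> irr n. utw n w \<subseteq> ker_char n \<psi>} = characters_trivial_on (ut n) (utw n w)"
proof -
  have "utw n w \<subseteq> ker_char n \<psi> \<longleftrightarrow> (\<forall>h\<in>utw n w. \<psi> h = 1)" if "\<psi> \<in> characters (ut n)" for \<psi>
    using utw_subset_ut[of n w] charactersD(1)[OF that] unfolding ker_char_def by auto
  then show ?thesis by (auto simp: irr_eq_characters characters_trivial_on_def)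
qed

lemma separating_character_ut:
  fixes x :: "nat \<Rightarrow> nat \<Rightarrow> 'a::{finite,field}"
  assumes "x \<in> ut n" "x \<notin> utw n w"
  shows "\<exists>\<psi>\<in>characters_trivial_on (ut n) (utw n w). \<psi> x \<noteq> 1"
proof -
  obtain i j where ij: "x i j \<noteq> 0" "\<not> (0 < j - i \<and> j - i \<le> iota w i)"
    using assms unfolding utw_def by auto
  obtain \<theta> :: "'a \<Rightarrow> complex" where \<theta>: "\<theta> 0 = 1" "\<And>a b. \<theta> (a + b) = \<theta> a * \<theta> b" "\<theta> (x i j) \<noteq> 1"
    using additive_character_exists[OF ij(1)] by blast
  define \<psi> where "\<psi> y = (if y \<in> ut n then \<theta> (y i j) else 0)" for y :: "nat \<Rightarrow> nat \<Rightarrow> 'a"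
  have "\<psi> \<in> characters (ut n)"
    using \<theta>(1,2) add_subgroup_ut unfolding characters_def add_subgroup_def \<psi>_def by auto
  moreover have "\<psi> h = 1" if "h \<in> utw n w" for h
    using that ij(2) \<theta>(1) unfolding \<psi>_def utw_iff by auto
  moreover have "\<psi> x \<noteq> 1" using assms(1) \<theta>(3) by (simp add: \<psi>_def)
  ultimately show ?thesis unfolding characters_trivial_on_def by blast
qed

lemma chibar_eq_sum_irr:
  fixes x :: "nat \<Rightarrow> nat \<Rightarrow> 'a::{finite,field}"
  shows "chibar n w x = (\<Sum>\<psi>\<in>{\<psi> \<in> irr n. utw n w \<subseteq> ker_char n \<psi>}. \<psi> 0 * \<psi> x)"
proof -
  have "chibar n w x = (if x \<in> utw n w then of_nat (card (ut n :: (nat \<Rightarrow> nat \<Rightarrow> 'a) set))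
      / of_nat (card (utw n w :: (nat \<Rightarrow> nat \<Rightarrow> 'a) set)) else 0)"
    using utw_subset_ut by (auto simp: chibar_def)
  also have "\<dots> = (\<Sum>\<psi>\<in>characters_trivial_on (ut n) (utw n w). \<psi> x)"
    by (rule sum_characters_trivial_on[OF add_subgroup_ut finite_ut add_subgroup_utw utw_subset_ut
          separating_character_ut, symmetric])
  also have "\<dots> = (\<Sum>\<psi>\<in>{\<psi> \<in> irr n. utw n w \<subseteq> ker_char n \<psi>}. \<psi> 0 * \<psi> x)"
    unfolding irr_kernel_eq_characters_trivial_on
    by (intro sum.cong refl) (auto simp: characters_trivial_on_def dest: charactersD(1))
  finally show ?thesis .
qed

section \<open>Supercharacters\<close>

lemma utw_mono: "iota v \<le> iota v' \<Longrightarrow> utw n v \<subseteq> utw n v'"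
  unfolding utw_def le_fun_def by (auto intro: order.trans)

lemma utw_subset_utw_iff:
  assumes v: "v \<in> Sn n" and v': "v' \<in> Sn n"
  shows "utw n v \<subseteq> (utw n v' :: (nat \<Rightarrow> nat \<Rightarrow> 'a::{finite,field}) set) \<longleftrightarrow> iota v \<le> iota v'"
proof
  assume sub: "utw n v \<subseteq> (utw n v' :: (nat \<Rightarrow> nat \<Rightarrow> 'a) set)"
  show "iota v \<le> iota v'"
  proof (rule ccontr)
    assume "\<not> iota v \<le> iota v'"
    then obtain k where k: "iota v' k < iota v k" unfolding le_fun_def by (meson not_le)
    define d where "d = iota v k"
    have kn: "k \<in> {1..n}" using k iota_eq_0_outside[OF v, of k] by auto
    have "d \<le> n - k" using iota_in_inv_tables[OF v] by (simp add: inv_tables_def d_def)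
    then have "(\<lambda>i j. if i = k \<and> j = k + d then 1 else 0) \<in> (utw n v :: (nat \<Rightarrow> nat \<Rightarrow> 'a) set)"
      using kn k unfolding utw_def ut_def d_def by auto
    then have "(\<lambda>i j. if i = k \<and> j = k + d then 1 else 0) \<in> (utw n v' :: (nat \<Rightarrow> nat \<Rightarrow> 'a) set)"
      using sub by blast
    then have "(if k = k \<and> k + d = k + d then 1 else 0) \<noteq> (0::'a) \<longrightarrow> k + d - k \<le> iota v' k"
      unfolding utw_def by blast
    then have "d \<le> iota v' k" by simp
    then show False using k by (simp add: d_def)
  qed
qed (rule utw_mono)

lemma utw_sup_subset_ker_char:
  fixes \<psi> :: "(nat \<Rightarrow> nat \<Rightarrow> 'a::{finite,field}) \<Rightarrow> complex"
  assumes "\<psi> \<in> irr n" "iota v = sup (iota v\<^sub>1) (iota v\<^sub>2)"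
    and "utw n v\<^sub>1 \<subseteq> ker_char n \<psi>" "utw n v\<^sub>2 \<subseteq> ker_char n \<psi>"
  shows "utw n v \<subseteq> ker_char n \<psi>"
proof
  fix x :: "nat \<Rightarrow> nat \<Rightarrow> 'a" assume x: "x \<in> utw n v"
  define x\<^sub>1 where "x\<^sub>1 i j = (if j - i \<le> iota v\<^sub>1 i then x i j else 0)" for i j
  define x\<^sub>2 where "x\<^sub>2 i j = (if j - i \<le> iota v\<^sub>1 i then 0 else x i j)" for i j
  have x_ut: "x \<in> ut n"
    and x_zero: "\<And>i j. \<not> (0 < j - i \<and> j - i \<le> max (iota v\<^sub>1 i) (iota v\<^sub>2 i)) \<Longrightarrow> x i j = 0"
    using x unfolding utw_iff assms(2) sup_fun_def sup_nat_def by blast+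
  have "x\<^sub>1 \<in> utw n v\<^sub>1" "x\<^sub>2 \<in> utw n v\<^sub>2"
    using x_ut x_zero unfolding utw_iff ut_iff x\<^sub>1_def x\<^sub>2_def by (auto simp: le_max_iff_disj)
  then have "\<psi> x\<^sub>1 = \<psi> 0" "\<psi> x\<^sub>2 = \<psi> 0" "x\<^sub>1 \<in> ut n" "x\<^sub>2 \<in> ut n"
    using assms(3,4) utw_subset_ut by (auto simp: ker_char_def)
  moreover have "x = x\<^sub>1 + x\<^sub>2" by (simp add: x\<^sub>1_def x\<^sub>2_def fun_eq_iff)
  ultimately have "\<psi> x = \<psi> 0"
    using charactersD(1,2)[OF assms(1)[unfolded irr_eq_characters]] by simp
  then show "x \<in> ker_char n \<psi>" using x utw_subset_ut by (auto simp: ker_char_def)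
qed

lemma utw_subset_zero: "iota v = (\<lambda>_. 0) \<Longrightarrow> utw n v \<subseteq> {0}"
proof
  fix x assume "iota v = (\<lambda>_. 0)" "x \<in> utw n v"
  then have "x i j = 0" for i j unfolding utw_iff by auto
  then show "x \<in> {0}" by (simp add: fun_eq_iff)
qed

text \<open>The members \<open>ut\<^sub>v \<subseteq> ker \<psi>\<close> are closed under joins, so one of maximal table size
  is the largest.\<close>

lemma largest_in_ker_exists:
  fixes \<psi> :: "(nat \<Rightarrow> nat \<Rightarrow> 'a::{finite,field}) \<Rightarrow> complex"
  assumes \<psi>: "\<psi> \<in> irr n"
  obtains v where "v \<in> Sn n" "largest_in_ker n v \<psi>"
proof -
  define M where "M = {v \<in> Sn n. utw n v \<subseteq> ker_char n \<psi>}"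
  define size where "size v = table_size n (iota v)" for v
  define v\<^sub>0 where "v\<^sub>0 = perm_of_table n (\<lambda>_. 0)"
  have v\<^sub>0: "v\<^sub>0 \<in> Sn n" "iota v\<^sub>0 = (\<lambda>_. 0)"
    using perm_of_table_in_Sn[OF zero_in_inv_tables] iota_perm_of_table[OF zero_in_inv_tables]
    by (simp_all add: v\<^sub>0_def)
  moreover have "utw n v\<^sub>0 \<subseteq> ({0} :: (nat \<Rightarrow> nat \<Rightarrow> 'a) set)" by (rule utw_subset_zero[OF v\<^sub>0(2)])
  moreover have "0 \<in> ker_char n \<psi>" by (simp add: ker_char_def ut_def)
  ultimately have "v\<^sub>0 \<in> M" by (auto simp: M_def)
  moreover have "finite M" using finite_Sn by (simp add: M_def)
  ultimately obtain v where v: "v \<in> M" and v_max: "\<And>v'. v' \<in> M \<Longrightarrow> size v' \<le> size v"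
    using Max_in[of "size ` M"] Max_ge[of "size ` M"] by (metis empty_iff finite_imageI imageE image_eqI)
  have below: "iota v' \<le> iota v" if v': "v' \<in> M" for v'
  proof (rule ccontr)
    assume "\<not> iota v' \<le> iota v"
    have vS: "v \<in> Sn n" and v'S: "v' \<in> Sn n" using v v' by (auto simp: M_def)
    define t where "t = sup (iota v) (iota v')"
    have t: "t \<in> inv_tables n" unfolding t_def by (intro sup_in_inv_tables iota_in_inv_tables vS v'S)
    have "perm_of_table n t \<in> M"
      using v v' utw_sup_subset_ker_char[OF \<psi>, of "perm_of_table n t" v v'] iota_perm_of_table[OF t]
        perm_of_table_in_Sn[OF t]
      by (simp add: M_def t_def)
    then have "size (perm_of_table n t) \<le> size v" by (rule v_max)
    moreover have "size v < table_size n t"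
      unfolding size_def t_def
      by (rule table_size_less_sup[OF iota_in_inv_tables[OF vS] iota_in_inv_tables[OF v'S]]) fact
    ultimately show False by (simp add: size_def iota_perm_of_table[OF t])
  qed
  have "largest_in_ker n v \<psi>"
    unfolding largest_in_ker_def
  proof (intro conjI ballI impI)
    show "utw n v \<subseteq> ker_char n \<psi>" using v by (simp add: M_def)
    fix v' assume "v' \<in> Sn n" "utw n v' \<subseteq> ker_char n \<psi>"
    then show "utw n v' \<subseteq> utw n v" by (intro utw_mono below) (simp add: M_def)
  qed
  moreover have "v \<in> Sn n" using v by (simp add: M_def)
  ultimately show ?thesis by (rule that[rotated])
qed

lemma largest_in_ker_iff:
  fixes \<psi> :: "(nat \<Rightarrow> nat \<Rightarrow> 'a::{finite,field}) \<Rightarrow> complex"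
  assumes "v \<in> Sn n" "w \<in> Sn n" "largest_in_ker n v \<psi>"
  shows "utw n w \<subseteq> ker_char n \<psi> \<longleftrightarrow> iota w \<le> iota v"
  using assms utw_subset_utw_iff[OF assms(2,1), where 'a = 'a] unfolding largest_in_ker_def by blast

lemma largest_in_ker_unique:
  fixes \<psi> :: "(nat \<Rightarrow> nat \<Rightarrow> 'a::{finite,field}) \<Rightarrow> complex"
  assumes "v \<in> Sn n" "v' \<in> Sn n" "largest_in_ker n v \<psi>" "largest_in_ker n v' \<psi>"
  shows "v = v'"
proof -
  have "iota v' \<le> iota v" "iota v \<le> iota v'"
    using largest_in_ker_iff[OF assms(1,2,3)] largest_in_ker_iff[OF assms(2,1,4)] assms(3,4)
    unfolding largest_in_ker_def by blast+
  then show ?thesis using inj_onD[OF inj_on_iota] assms(1,2) by (metis order.antisym)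
qed

lemma chibar_eq_sum_chi:
  fixes x :: "nat \<Rightarrow> nat \<Rightarrow> 'a::{finite,field}"
  assumes w: "w \<in> Sn n"
  shows "chibar n w x = (\<Sum>v\<in>Sn n. (if iota w \<le> iota v then 1 else 0) * chi n v x)"
proof -
  have "(\<Sum>v\<in>Sn n. (if iota w \<le> iota v then 1 else 0) * chi n v x)
      = (\<Sum>v\<in>Sn n. \<Sum>\<psi>\<in>irr n. if largest_in_ker n v \<psi> \<and> iota w \<le> iota v then \<psi> 0 * \<psi> x else 0)"
    unfolding chi_def by (intro sum.cong refl) (simp add: sum.inter_filter[OF finite_irr])
  also have "\<dots> = (\<Sum>\<psi>\<in>irr n. \<Sum>v\<in>Sn n.
      if largest_in_ker n v \<psi> \<and> iota w \<le> iota v then \<psi> 0 * \<psi> x else 0)"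
    by (rule sum.swap)
  also have "\<dots> = (\<Sum>\<psi>\<in>irr n. if utw n w \<subseteq> ker_char n \<psi> then \<psi> 0 * \<psi> x else 0)"
  proof (intro sum.cong refl)
    fix \<psi> :: "(nat \<Rightarrow> nat \<Rightarrow> 'a) \<Rightarrow> complex" assume "\<psi> \<in> irr n"
    then obtain v\<^sub>0 where v\<^sub>0: "v\<^sub>0 \<in> Sn n" "largest_in_ker n v\<^sub>0 \<psi>" by (rule largest_in_ker_exists)
    have "(\<Sum>v\<in>Sn n. if largest_in_ker n v \<psi> \<and> iota w \<le> iota v then \<psi> 0 * \<psi> x else 0)
        = (\<Sum>v\<in>Sn n. if v = v\<^sub>0 then (if iota w \<le> iota v\<^sub>0 then \<psi> 0 * \<psi> x else 0) else 0)"
    proof (intro sum.cong refl)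
      fix v assume "v \<in> Sn n"
      then have "largest_in_ker n v \<psi> \<longleftrightarrow> v = v\<^sub>0"
        using largest_in_ker_unique[OF _ v\<^sub>0(1) _ v\<^sub>0(2)] v\<^sub>0(2) by blast
      then show "(if largest_in_ker n v \<psi> \<and> iota w \<le> iota v then \<psi> 0 * \<psi> x else 0)
          = (if v = v\<^sub>0 then (if iota w \<le> iota v\<^sub>0 then \<psi> 0 * \<psi> x else 0) else 0)" by simp
    qed
    also have "\<dots> = (if utw n w \<subseteq> ker_char n \<psi> then \<psi> 0 * \<psi> x else 0)"
      using v\<^sub>0 largest_in_ker_iff[OF v\<^sub>0(1) w v\<^sub>0(2)] by (simp add: sum.delta[OF finite_Sn])
    finally show "(\<Sum>v\<in>Sn n. if largest_in_ker n v \<psi> \<and> iota w \<le> iota v then \<psi> 0 * \<psi> x else 0)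
        = (if utw n w \<subseteq> ker_char n \<psi> then \<psi> 0 * \<psi> x else 0)" .
  qed
  also have "\<dots> = chibar n w x"
    by (simp add: sum.inter_filter[OF finite_irr] chibar_eq_sum_irr)
  finally show ?thesis ..
qed

lemma sum_iota_le_chi_inv:
  fixes x :: "nat \<Rightarrow> nat \<Rightarrow> 'a::{finite,field}"
  assumes "w \<in> Sn n"
  shows "(\<Sum>v\<in>Sn n. (if iota w \<le> iota v then 1 else 0) * chi n (inv v) x)
    = (\<Sum>u\<in>Sn n. (if \<forall>k\<in>{1..n}. kappa (inv w) k \<le> kappa u k then 1 else 0) * chi n u x)"
proof -
  have "(\<Sum>v\<in>Sn n. (if iota w \<le> iota v then 1 else 0) * chi n (inv v) x)
      = (\<Sum>v\<in>Sn n. (if iota w \<le> iota (inv (inv v)) then 1 else 0) * chi n (inv v) x)"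
    by (intro sum.cong refl) (simp add: Sn_def permutes_inv_inv)
  also have "\<dots> = (\<Sum>u\<in>Sn n. (if iota w \<le> iota (inv u) then 1 else 0) * chi n u x)"
    by (rule sum_Sn_inv)
  finally show ?thesis using iota_le_iota_inv_iff[OF assms] by (simp cong: sum.cong)
qed

text \<open>Moebius inversion of \<open>chibar_eq_sum_chi\<close>, using \<open>sum_sign_Cvee_code_ge_below\<close>.\<close>

lemma sum_code_ge_chi_eq_sum_chibar:
  fixes x :: "nat \<Rightarrow> nat \<Rightarrow> 'a::{finite,field}"
  shows "(\<Sum>u\<in>Sn n. (if \<forall>k\<in>{1..n}. c k \<le> kappa u k then 1 else 0) * chi n u x) =
    (\<Sum>z\<in>{z\<in>Sn n. card (Cvee_code_ge n z c) = 1}.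
      (-1) ^ (iota_size n z - iota_size n (THE y. y \<in> Cvee_code_ge n z c)) * chibar n z x)"
proof -
  let ?A = "\<lambda>z. \<Sum>y\<in>Cvee_code_ge n z c. (-1::complex) ^ (iota_size n z - iota_size n y)"
  have "(\<Sum>z\<in>{z\<in>Sn n. card (Cvee_code_ge n z c) = 1}.
      (-1) ^ (iota_size n z - iota_size n (THE y. y \<in> Cvee_code_ge n z c)) * chibar n z x)
      = (\<Sum>z\<in>Sn n. ?A z * chibar n z x)"
    unfolding sum.inter_filter[OF finite_Sn] by (intro sum.cong refl) (simp add: sum_sign_Cvee_code_ge)
  also have "\<dots> = (\<Sum>z\<in>Sn n. \<Sum>u\<in>Sn n. ?A z * ((if iota z \<le> iota u then 1 else 0) * chi n u x))"
    by (simp add: chibar_eq_sum_chi sum_distrib_left)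
  also have "\<dots> = (\<Sum>u\<in>Sn n. (\<Sum>z\<in>{z \<in> Sn n. iota z \<le> iota u}. ?A z) * chi n u x)"
    by (subst sum.swap) (simp add: sum_distrib_right sum.inter_filter[OF finite_Sn] if_distrib
        if_distribR cong: if_cong)
  also have "\<dots> = (\<Sum>u\<in>Sn n. (if \<forall>k\<in>{1..n}. c k \<le> kappa u k then 1 else 0) * chi n u x)"
    by (intro sum.cong refl) (simp add: sum_sign_Cvee_code_ge_below)
  finally show ?thesis ..
qed

theorem theorem5p1:
  fixes n :: nat and w :: "nat \<Rightarrow> nat"
    and star :: "((nat \<Rightarrow> nat \<Rightarrow> 'a::{finite,field}) \<Rightarrow> complex) \<Rightarrow> ((nat \<Rightarrow> nat \<Rightarrow> 'a) \<Rightarrow> complex)"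
  assumes "w \<in> Sn n"
    and star_def: "\<And>c. star (\<lambda>x. \<Sum>v\<in>Sn n. c v * chi n v x) = (\<lambda>x. \<Sum>v\<in>Sn n. c v * chi n (inv v) x)"
  shows "star (chibar n w) =
    (\<lambda>x. \<Sum>z\<in>{z\<in>Sn n. card {y\<in>Cvee n z. \<forall>k\<in>{1..n}. kappa (inv w) k \<le> kappa y k} = 1}.
        (-1::complex) ^ (iota_size n z -
            iota_size n (THE y. y \<in> Cvee n z \<and> (\<forall>k\<in>{1..n}. kappa (inv w) k \<le> kappa y k)))
        * chibar n z x)"
proof -
  have expand: "chibar n w = (\<lambda>x. \<Sum>v\<in>Sn n. (if iota w \<le> iota v then 1 else 0) * chi n v x)"
    using chibar_eq_sum_chi[OF assms(1)] by blast
  have "star (chibar n w) = (\<lambda>x. \<Sum>v\<in>Sn n. (if iota w \<le> iota v then 1 else 0) * chi n (inv v) x)"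
    unfolding expand by (rule star_def)
  also have "\<dots> = (\<lambda>x. \<Sum>u\<in>Sn n. (if \<forall>k\<in>{1..n}. kappa (inv w) k \<le> kappa u k then 1 else 0) * chi n u x)"
    by (rule ext, rule sum_iota_le_chi_inv[OF assms(1)])
  also have "\<dots> = (\<lambda>x. \<Sum>z\<in>{z\<in>Sn n. card (Cvee_code_ge n z (kappa (inv w))) = 1}.
      (-1) ^ (iota_size n z - iota_size n (THE y. y \<in> Cvee_code_ge n z (kappa (inv w)))) * chibar n z x)"
    by (rule ext, rule sum_code_ge_chi_eq_sum_chibar)
  finally show ?thesis by (simp add: Cvee_code_ge_def)
qed

end
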